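(* For $k\in\omega$ let $L(k)$ be the number of (isomorphism types of) countable homogeneous colored linear orderings in $k$ colors. (1) $L(k)$ equals the number of (isomorphism types of) models of $T^{'-}_k$. (2) Let $J(0)=1$ and $J(k+1)=2(k+1)J(k)+\sum_{i=2}^{k+1}\binom{k+1}{i}J(k+1-i)$. Then $L(k)=\sum_{i=0}^{k}J(i)\binom{k}{i}$. (3) $\sum_{k\ge0}L(k)\frac{x^k}{k!}=H(x)=\frac{e^x}{2-x-e^x}$. (4) With $W$ the principal branch of the Lambert $W$ function, $Z=2-W(e^2)\approx0.442854$ and $R=\frac{-e^2}{e^{W(e^2)}+e^2}\approx-0.6089389$, one has $L(k)\sim -k!\,R\,(1/Z)^{k+1}$ as $k\to\infty$. (5) The proportion, among the countable homogeneous colored linear orderings in $k$ colors, of those using all $k$ colors tends to $\frac{1}{W(e^2)}\approx0.6422007$ as $k\to\infty$.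
   Context: A colored linear ordering in $k$ colors is a linear ordering together with $k$ fixed (labeled) unary predicates partitioning it (some colors may be unused); isomorphisms preserve order and each color. It is homogeneous if every isomorphism between finite substructures extends to an automorphism. $T^{'-}_k$ is the theory in the language $(<,R_1,\dots,R_k,S_1,\dots,S_k)$ of unary predicates with axioms: $<$ is a linear order; every element satisfies some $R_i$ or some $S_i$; no element satisfies two distinct $R_i$; no element satisfies both some $R_i$ and some $S_j$; each $R_i$ and each $S_i$ holds of at most one element; for no $i$ are both $R_i$ and $S_i$ realized. *)

theory Defs
  imports Complex_Main "HOL-Computational_Algebra.Formal_Power_Series" "HOL-Library.Landau_Symbols"
begin

definition iso_types :: "('s \<Rightarrow> bool) \<Rightarrow> ('s \<Rightarrow> 's \<Rightarrow> bool) \<Rightarrow> 's set set" where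
  "iso_types P rel = {{T. P T \<and> rel S T} | S. P S}"

definition strict_linear_on :: "nat set \<Rightarrow> (nat \<Rightarrow> nat \<Rightarrow> bool) \<Rightarrow> bool" where
  "strict_linear_on A lt \<longleftrightarrow>
     (\<forall>x\<in>A. \<not> lt x x) \<and>
     (\<forall>x\<in>A. \<forall>y\<in>A. \<forall>z\<in>A. lt x y \<and> lt y z \<longrightarrow> lt x z) \<and>
     (\<forall>x\<in>A. \<forall>y\<in>A. x \<noteq> y \<longrightarrow> lt x y \<or> lt y x)"

text \<open>A countable colored linear ordering in k colors: carrier A (a subset of nat, so
  countable), strict order lt, colour map c with values in {0..<k} (color i = predicate R_(i+1)).\<close>
type_synonym clo = "nat set \<times> (nat \<Rightarrow> nat \<Rightarrow> bool) \<times> (nat \<Rightarrow> nat)"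

definition is_clo :: "nat \<Rightarrow> clo \<Rightarrow> bool" where
  "is_clo k S = (case S of (A, lt, c) \<Rightarrow> strict_linear_on A lt \<and> (\<forall>x\<in>A. c x < k))"

definition clo_iso_on :: "(nat \<Rightarrow> nat \<Rightarrow> bool) \<Rightarrow> (nat \<Rightarrow> nat) \<Rightarrow> nat set \<Rightarrow>
    (nat \<Rightarrow> nat \<Rightarrow> bool) \<Rightarrow> (nat \<Rightarrow> nat) \<Rightarrow> nat set \<Rightarrow> (nat \<Rightarrow> nat) \<Rightarrow> bool" where
  "clo_iso_on lt c X lt' c' Y f \<longleftrightarrow> bij_betw f X Y \<and>
     (\<forall>x\<in>X. \<forall>y\<in>X. lt x y \<longleftrightarrow> lt' (f x) (f y)) \<and> (\<forall>x\<in>X. c' (f x) = c x)"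

definition clo_iso :: "clo \<Rightarrow> clo \<Rightarrow> bool" where
  "clo_iso S T = (case S of (A, lt, c) \<Rightarrow> case T of (B, lt', c') \<Rightarrow>
     (\<exists>f. clo_iso_on lt c A lt' c' B f))"

definition clo_homogeneous :: "clo \<Rightarrow> bool" where
  "clo_homogeneous S = (case S of (A, lt, c) \<Rightarrow>
     (\<forall>X Y p. finite X \<and> X \<subseteq> A \<and> Y \<subseteq> A \<and> clo_iso_on lt c X lt c Y p \<longrightarrow>
        (\<exists>g. clo_iso_on lt c A lt c A g \<and> (\<forall>x\<in>X. g x = p x))))"

definition is_hclo :: "nat \<Rightarrow> clo \<Rightarrow> bool" where
  "is_hclo k S \<longleftrightarrow> is_clo k S \<and> clo_homogeneous S"

definition L :: "nat \<Rightarrow> nat" where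
  "L k = card (iso_types (is_hclo k) clo_iso)"

definition L_all :: "nat \<Rightarrow> nat" where
  "L_all k = card (iso_types (\<lambda>S. is_hclo k S \<and> snd (snd S) ` fst S = {0..<k}) clo_iso)"

text \<open>Structure (A, lt, R, S): R i x means x satisfies R_(i+1), S i x means x satisfies S_(i+1).\<close>
type_synonym tstr = "nat set \<times> (nat \<Rightarrow> nat \<Rightarrow> bool) \<times> (nat \<Rightarrow> nat \<Rightarrow> bool) \<times> (nat \<Rightarrow> nat \<Rightarrow> bool)"

definition is_model_T :: "nat \<Rightarrow> tstr \<Rightarrow> bool" where
  "is_model_T k M = (case M of (A, lt, R, S) \<Rightarrow>
     strict_linear_on A lt \<and>
     (\<forall>x\<in>A. (\<exists>i<k. R i x) \<or> (\<exists>i<k. S i x)) \<and>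
     (\<forall>x\<in>A. \<forall>i<k. \<forall>j<k. R i x \<and> R j x \<longrightarrow> i = j) \<and>
     (\<forall>x\<in>A. \<forall>i<k. \<forall>j<k. \<not> (R i x \<and> S j x)) \<and>
     (\<forall>i<k. \<forall>x\<in>A. \<forall>y\<in>A. R i x \<and> R i y \<longrightarrow> x = y) \<and>
     (\<forall>i<k. \<forall>x\<in>A. \<forall>y\<in>A. S i x \<and> S i y \<longrightarrow> x = y) \<and>
     (\<forall>i<k. \<not> ((\<exists>x\<in>A. R i x) \<and> (\<exists>x\<in>A. S i x))))"

definition T_iso :: "nat \<Rightarrow> tstr \<Rightarrow> tstr \<Rightarrow> bool" where
  "T_iso k M N = (case M of (A, lt, R, S) \<Rightarrow> case N of (B, lt', R', S') \<Rightarrow>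
     (\<exists>f. bij_betw f A B \<and>
        (\<forall>x\<in>A. \<forall>y\<in>A. lt x y \<longleftrightarrow> lt' (f x) (f y)) \<and>
        (\<forall>i<k. \<forall>x\<in>A. R i x \<longleftrightarrow> R' i (f x)) \<and>
        (\<forall>i<k. \<forall>x\<in>A. S i x \<longleftrightarrow> S' i (f x))))"

definition num_models_T :: "nat \<Rightarrow> nat" where
  "num_models_T k = card (iso_types (is_model_T k) (T_iso k))"

function J :: "nat \<Rightarrow> nat" where
  "J 0 = 1"
| "J (Suc k) = 2 * Suc k * J k + (\<Sum>i\<in>{2..Suc k}. (Suc k choose i) * J (Suc k - i))"
  by pat_completeness auto
termination by (relation "measure id") auto

definition lambertW :: "real \<Rightarrow> real" where
  "lambertW y = (THE w. -1 \<le> w \<and> w * exp w = y)"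

end

theory Submission
  imports Defs "HOL-Complex_Analysis.Complex_Analysis"
begin

text \<open>A countable homogeneous coloured linear ordering is determined up to isomorphism by the set
  \<open>U\<close> of colours it uses and the relation \<open>Q\<close> holding between colours \<open>i\<close> and \<open>j\<close> when some point
  of colour \<open>i\<close> lies below some point of colour \<open>j\<close>.  Homogeneity makes \<open>Q\<close> transitive and
  total on \<open>U\<close>; conversely a back-and-forth argument shows that equal invariants give isomorphic
  orderings, and every such pair is realised by dense sets of dyadic rationals.  The same pairs
  classify the models of \<open>T'\<^sup>-\<^sub>k\<close>, one point per block of \<open>Q\<close>.  Removing the top block of \<open>Q\<close>
  gives the recursion for \<open>J\<close>, hence \<open>(2 - x - e\<^sup>x) \<Sum> J(n) x\<^sup>n / n! = 1\<close>; the generating function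
  of \<open>L\<close> has a single simple pole \<open>\<rho> = 2 - W(e\<^sup>2)\<close> in the disc of radius \<open>3/4\<close>, and the
  asymptotics follow by singularity analysis.\<close>

section \<open>Transitive relations total on distinct elements\<close>

lemma sum_Pow_by_card:
  assumes "finite U"
  shows "(\<Sum>T\<in>Pow U. f (card T)) = (\<Sum>i=0..card U. of_nat (card U choose i) * (f i :: 'a :: comm_semiring_1))"
proof -
  have "(\<Sum>T\<in>Pow U. f (card T)) = (\<Sum>i=0..card U. \<Sum>T\<in>{T\<in>Pow U. card T = i}. f (card T))"
    by (rule sum.group[symmetric]) (use assms in \<open>auto intro: card_mono\<close>)
  also have "\<dots> = (\<Sum>i=0..card U. of_nat (card {T. T \<subseteq> U \<and> card T = i}) * f i)"
    by (rule sum.cong) auto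
  finally show ?thesis
    by (simp add: n_subsets[OF assms])
qed

lemma finite_total_trans_has_greatest:
  assumes "finite V" "V \<noteq> {}"
    and total: "\<And>x y. x \<in> V \<Longrightarrow> y \<in> V \<Longrightarrow> x \<noteq> y \<Longrightarrow> r x y \<or> r y x"
    and transitive: "\<And>x y z. x \<in> V \<Longrightarrow> y \<in> V \<Longrightarrow> z \<in> V \<Longrightarrow> r x y \<Longrightarrow> r y z \<Longrightarrow> r x z"
  shows "\<exists>m\<in>V. \<forall>x\<in>V. x \<noteq> m \<longrightarrow> r x m"
  using assms(1,2) total transitive
proof (induction V rule: finite_ne_induct)
  case (singleton x)
  show ?case
    by blast
next
  case (insert a V)
  have "\<exists>m\<in>V. \<forall>x\<in>V. x \<noteq> m \<longrightarrow> r x m"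
  proof (rule insert.IH)
    show "r x y \<or> r y x" if "x \<in> V" "y \<in> V" "x \<noteq> y" for x y
      using insert.prems(1)[of x y] that by blast
    show "r x z" if "x \<in> V" "y \<in> V" "z \<in> V" "r x y" "r y z" for x y z
      using insert.prems(2)[of x y z] that by blast
  qed
  then obtain m where m: "m \<in> V" "\<forall>x\<in>V. x \<noteq> m \<longrightarrow> r x m"
    by blast
  show ?case
  proof (cases "r m a")
    case True
    have "r x a" if "x \<in> V" "x \<noteq> m" for x
      using insert.prems(2)[of x m a] m that True by blast
    with True have "\<forall>x\<in>insert a V. x \<noteq> a \<longrightarrow> r x a"
      by blast
    then show ?thesis
      by blast
  next
    case False
    then have "r a m"
      using insert.prems(1)[of a m] insert.hyps m(1) by blast
    then show ?thesis
      using m by blast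
  qed
qed

text \<open>A transitive relation \<open>R\<close> that is total on distinct elements of \<open>U\<close> cuts \<open>U\<close> into
  linearly ordered blocks \<open>{j. (i, j) \<in> R \<and> (j, i) \<in> R}\<close>; a block with two or more elements
  is reflexive, a singleton may or may not be.  Removing the top block yields the recursion
  defining \<open>J\<close>.\<close>

definition trans_total_rels :: "'a set \<Rightarrow> ('a \<times> 'a) set set" where
  "trans_total_rels U =
     {R. R \<subseteq> U \<times> U \<and> trans R \<and> (\<forall>i\<in>U. \<forall>j\<in>U. i \<noteq> j \<longrightarrow> (i, j) \<in> R \<or> (j, i) \<in> R)}"

definition top_block :: "('a \<times> 'a) set \<Rightarrow> 'a set \<Rightarrow> 'a set" where
  "top_block R U = {i\<in>U. \<forall>j\<in>U. j \<noteq> i \<longrightarrow> (j, i) \<in> R}"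

definition stack_on_top :: "'a set \<Rightarrow> 'a set \<Rightarrow> ('a \<times> 'a) set \<Rightarrow> bool \<Rightarrow> ('a \<times> 'a) set" where
  "stack_on_top U T R b = R \<union> (U - T) \<times> T \<union> (if b then T \<times> T else {})"

lemma trans_total_relsD:
  assumes "R \<in> trans_total_rels U"
  shows "R \<subseteq> U \<times> U" "trans R" "\<And>i j. i \<in> U \<Longrightarrow> j \<in> U \<Longrightarrow> i \<noteq> j \<Longrightarrow> (i, j) \<in> R \<or> (j, i) \<in> R"
  using assms by (auto simp: trans_total_rels_def)

lemma finite_trans_total_rels: "finite U \<Longrightarrow> finite (trans_total_rels U)"
  by (rule finite_subset[of _ "Pow (U \<times> U)"]) (auto simp: trans_total_rels_def)

lemma trans_total_rels_empty: "trans_total_rels {} = {{}}"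
  by (auto simp: trans_total_rels_def trans_def)

lemma top_block_nonempty:
  assumes "R \<in> trans_total_rels U" "finite U" "U \<noteq> {}"
  shows "top_block R U \<noteq> {}"
proof -
  have "\<exists>m\<in>U. \<forall>x\<in>U. x \<noteq> m \<longrightarrow> (x, m) \<in> R"
  proof (rule finite_total_trans_has_greatest[OF assms(2,3)])
    show "(x, y) \<in> R \<or> (y, x) \<in> R" if "x \<in> U" "y \<in> U" "x \<noteq> y" for x y
      using trans_total_relsD(3)[OF assms(1) that] .
    show "(x, z) \<in> R" if "(x, y) \<in> R" "(y, z) \<in> R" for x y z
      using trans_total_relsD(2)[OF assms(1)] that by (rule transD)
  qed
  then show ?thesis
    by (auto simp: top_block_def)
qed

lemma card_eq_1_same: "card T = 1 \<Longrightarrow> i \<in> T \<Longrightarrow> j \<in> T \<Longrightarrow> i = j"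
  by (metis card_1_singletonE singletonD)

context
  fixes U T :: "'a set"
  assumes U: "finite U" and T: "T \<subseteq> U" "T \<noteq> {}"
begin

lemma stack_on_top_mem:
  assumes R: "R \<in> trans_total_rels (U - T)" and b: "card T \<noteq> 1 \<Longrightarrow> b"
  shows "stack_on_top U T R b \<in> trans_total_rels U"
proof -
  note R' = trans_total_relsD[OF R]
  have b': "b" if "i \<in> T" "j \<in> T" "i \<noteq> j" for i j
    using b card_eq_1_same[of T i j] that by blast
  show ?thesis
    unfolding trans_total_rels_def
  proof (intro CollectI conjI ballI impI)
    show "stack_on_top U T R b \<subseteq> U \<times> U"
      using R'(1) T by (auto simp: stack_on_top_def)
    show "trans (stack_on_top U T R b)"
    proof (rule transI)
      fix x y z assume "(x, y) \<in> stack_on_top U T R b" "(y, z) \<in> stack_on_top U T R b"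
      then show "(x, z) \<in> stack_on_top U T R b"
        using R'(1,2) unfolding stack_on_top_def by (auto split: if_splits dest: transD)
    qed
    fix i j assume "i \<in> U" "j \<in> U" "i \<noteq> j"
    then show "(i, j) \<in> stack_on_top U T R b \<or> (j, i) \<in> stack_on_top U T R b"
      using R'(3)[of i j] b' unfolding stack_on_top_def by (cases "i \<in> T"; cases "j \<in> T") auto
  qed
qed

lemma top_block_stack_on_top:
  assumes R: "R \<subseteq> (U - T) \<times> (U - T)" and b: "card T \<noteq> 1 \<Longrightarrow> b"
  shows "top_block (stack_on_top U T R b) U = T"
proof (rule set_eqI, rule iffI)
  fix i assume i: "i \<in> top_block (stack_on_top U T R b) U"
  obtain t where t: "t \<in> T"
    using T by auto
  show "i \<in> T"
  proof (rule ccontr)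
    assume "i \<notin> T"
    then have "t \<noteq> i" "(t, i) \<notin> stack_on_top U T R b"
      using R t by (auto simp: stack_on_top_def)
    then show False
      using i t T(1) unfolding top_block_def by blast
  qed
next
  fix i assume i: "i \<in> T"
  have "(j, i) \<in> stack_on_top U T R b" if "j \<in> U" "j \<noteq> i" for j
  proof (cases "j \<in> T")
    case True
    then have "b"
      using b card_eq_1_same[of T i j] i that(2) by blast
    then show ?thesis
      using True i by (simp add: stack_on_top_def)
  next
    case False
    then show ?thesis
      using i that(1) by (simp add: stack_on_top_def)
  qed
  then show "i \<in> top_block (stack_on_top U T R b) U"
    using i T(1) unfolding top_block_def by blast
qed

lemma stack_on_top_restrict:
  "R \<subseteq> (U - T) \<times> (U - T) \<Longrightarrow> stack_on_top U T R b \<inter> (U - T) \<times> (U - T) = R"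
  by (auto simp: stack_on_top_def)

lemma stack_on_top_refl_iff:
  "R \<subseteq> (U - T) \<times> (U - T) \<Longrightarrow> (\<exists>t\<in>T. (t, t) \<in> stack_on_top U T R b) \<longleftrightarrow> b"
  using T by (auto simp: stack_on_top_def)

end

context
  fixes U T :: "'a set" and R :: "('a \<times> 'a) set"
  assumes U: "finite U" and R: "R \<in> trans_total_rels U"
    and T: "top_block R U = T" "T \<noteq> {}"
begin

private lemma top: "i \<in> T \<Longrightarrow> j \<in> U \<Longrightarrow> j \<noteq> i \<Longrightarrow> (j, i) \<in> R" and TU: "T \<subseteq> U"
  using T(1) unfolding top_block_def by blast+

lemma below_top_block_mem: "R \<inter> (U - T) \<times> (U - T) \<in> trans_total_rels (U - T)"
  using trans_total_relsD[OF R] unfolding trans_total_rels_def trans_def by blast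

lemma top_block_refl:
  assumes "card T \<noteq> 1" "t \<in> T"
  shows "(t, t) \<in> R"
proof -
  have "T \<noteq> {t}"
    using assms(1) by auto
  then obtain s where "s \<in> T" "s \<noteq> t"
    using assms(2) by blast
  then have "(s, t) \<in> R" "(t, s) \<in> R"
    using top TU assms(2) by auto
  then show ?thesis
    using trans_total_relsD(2)[OF R] by (auto dest: transD)
qed

lemma stack_on_top_decompose:
  "R = stack_on_top U T (R \<inter> (U - T) \<times> (U - T)) (\<exists>t\<in>T. (t, t) \<in> R)"
proof -
  note R' = trans_total_relsD[OF R]
  have not_down: "(x, y) \<notin> R" if "x \<in> T" "y \<in> U" "y \<notin> T" for x y
  proof
    assume xy: "(x, y) \<in> R"
    from that T(1) obtain j where j: "j \<in> U" "j \<noteq> y" "(j, y) \<notin> R"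
      unfolding top_block_def by blast
    then have "j \<noteq> x"
      using xy by blast
    then have "(j, x) \<in> R"
      using top that j by auto
    then show False
      using xy j R'(2) by (auto dest: transD)
  qed
  have within: "(x, y) \<in> R \<longleftrightarrow> (\<exists>t\<in>T. (t, t) \<in> R)" if "x \<in> T" "y \<in> T" for x y
  proof (cases "card T = 1")
    case True
    then show ?thesis
      using that card_eq_1_same[OF True] by blast
  next
    case False
    then show ?thesis
      using that top TU top_block_refl[OF False] by (cases "x = y") auto
  qed
  show ?thesis
  proof (rule set_eqI, clarify)
    fix x y
    show "(x, y) \<in> R \<longleftrightarrow> (x, y) \<in> stack_on_top U T (R \<inter> (U - T) \<times> (U - T)) (\<exists>t\<in>T. (t, t) \<in> R)"
      using R'(1) TU not_down[of x y] within[of x y] top[of y x]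
      by (cases "x \<in> T"; cases "y \<in> T") (auto simp: stack_on_top_def)
  qed
qed

end

lemma card_top_block_class:
  assumes U: "finite U" and T: "T \<subseteq> U" "T \<noteq> {}"
  shows "card {R \<in> trans_total_rels U. top_block R U = T}
    = (if card T = 1 then 2 else 1) * card (trans_total_rels (U - T))"
proof -
  define B where "B = (if card T = 1 then UNIV else {True})"
  define st where "st = (\<lambda>(R, b). stack_on_top U T R b)"
  have B: "card T \<noteq> 1 \<Longrightarrow> b" if "b \<in> B" for b
    using that by (auto simp: B_def split: if_splits)
  have "{R \<in> trans_total_rels U. top_block R U = T} = st ` (trans_total_rels (U - T) \<times> B)"
  proof
    show "{R \<in> trans_total_rels U. top_block R U = T} \<subseteq> st ` (trans_total_rels (U - T) \<times> B)"
    proof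
      fix R assume "R \<in> {R \<in> trans_total_rels U. top_block R U = T}"
      then have R: "R \<in> trans_total_rels U" "top_block R U = T"
        by auto
      have "(R \<inter> (U - T) \<times> (U - T), \<exists>t\<in>T. (t, t) \<in> R) \<in> trans_total_rels (U - T) \<times> B"
        using below_top_block_mem[OF U R T(2)] top_block_refl[OF U R T(2)] T(2) by (auto simp: B_def)
      moreover have "R = st (R \<inter> (U - T) \<times> (U - T), \<exists>t\<in>T. (t, t) \<in> R)"
        using stack_on_top_decompose[OF U R T(2)] by (simp add: st_def)
      ultimately show "R \<in> st ` (trans_total_rels (U - T) \<times> B)"
        by (rule rev_image_eqI)
    qed
    show "st ` (trans_total_rels (U - T) \<times> B) \<subseteq> {R \<in> trans_total_rels U. top_block R U = T}"
    proof (clarsimp simp: st_def)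
      fix R b assume "R \<in> trans_total_rels (U - T)" "b \<in> B"
      then show "stack_on_top U T R b \<in> trans_total_rels U \<and> top_block (stack_on_top U T R b) U = T"
        using stack_on_top_mem[OF U T] top_block_stack_on_top[OF U T] B trans_total_relsD(1) by metis
    qed
  qed
  moreover have "inj_on st (trans_total_rels (U - T) \<times> B)"
  proof (rule inj_onI, clarsimp simp: st_def)
    fix R1 b1 R2 b2
    assume R: "R1 \<in> trans_total_rels (U - T)" "R2 \<in> trans_total_rels (U - T)"
      and e: "stack_on_top U T R1 b1 = stack_on_top U T R2 b2"
    show "R1 = R2 \<and> b1 = b2"
      using stack_on_top_restrict[OF U T, of R1 b1] stack_on_top_restrict[OF U T, of R2 b2]
        stack_on_top_refl_iff[OF U T, of R1 b1] stack_on_top_refl_iff[OF U T, of R2 b2]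
        trans_total_relsD(1)[OF R(1)] trans_total_relsD(1)[OF R(2)] e
      by auto
  qed
  ultimately show ?thesis
    using U by (simp add: card_image card_cartesian_product B_def finite_trans_total_rels)
qed

lemma J_Suc_eq_sum:
  "J (Suc m) = (\<Sum>i=1..Suc m. (Suc m choose i) * ((if i = 1 then 2 else 1) * J (Suc m - i)))"
proof -
  have "{1..Suc m} = insert 1 {2..Suc m}"
    by auto
  then show ?thesis
    by (simp add: algebra_simps)
qed

lemma card_trans_total_rels: "finite U \<Longrightarrow> card (trans_total_rels U) = J (card U)"
proof (induction "card U" arbitrary: U rule: less_induct)
  case less
  show ?case
  proof (cases "U = {}")
    case True
    then show ?thesis
      by (simp add: trans_total_rels_empty)
  next
    case False
    define w where "w = (\<lambda>i. (if i = 1 then 2 else 1) * J (card U - i))"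
    have "top_block R U \<in> Pow U - {{}}" if "R \<in> trans_total_rels U" for R
      using top_block_nonempty[OF that less.prems False] by (auto simp: top_block_def)
    then have "card (trans_total_rels U)
        = (\<Sum>T\<in>Pow U - {{}}. card {R \<in> trans_total_rels U. top_block R U = T})"
      using less.prems by (subst card_eq_sum, subst sum.group[symmetric]) (auto simp: finite_trans_total_rels)
    also have "\<dots> = (\<Sum>T\<in>Pow U - {{}}. w (card T))"
    proof (rule sum.cong[OF refl])
      fix T assume T: "T \<in> Pow U - {{}}"
      then have "finite T" "T \<subseteq> U" "T \<noteq> {}"
        using less.prems finite_subset by auto
      moreover have "0 < card T" "card T \<le> card U"
        using \<open>finite T\<close> \<open>T \<noteq> {}\<close> \<open>T \<subseteq> U\<close> less.prems by (auto simp: card_mono)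
      ultimately have "card (U - T) < card U" "card (U - T) = card U - card T"
        by (simp_all add: card_Diff_subset)
      then show "card {R \<in> trans_total_rels U. top_block R U = T} = w (card T)"
        using card_top_block_class[OF less.prems \<open>T \<subseteq> U\<close> \<open>T \<noteq> {}\<close>] less.hyps less.prems
        by (simp add: w_def)
    qed
    also have "\<dots> = (\<Sum>T\<in>Pow U. w (card T)) - w 0"
      using less.prems by (subst sum.remove[of _ "{}"]) auto
    also have "\<dots> = (\<Sum>i=1..card U. (card U choose i) * w i)"
      using sum_Pow_by_card[OF less.prems, of w] by (simp add: sum.atLeast_Suc_atMost)
    also have "\<dots> = J (card U)"
      using False less.prems by (cases "card U") (simp_all add: w_def J_Suc_eq_sum del: J.simps)
    finally show ?thesis .
  qed
qed

lemma card_iso_types_complete_invariant: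
  assumes "\<And>S T. P S \<Longrightarrow> P T \<Longrightarrow> rel S T \<longleftrightarrow> f S = f T"
  shows "card (iso_types P rel) = card (f ` {S. P S})"
proof -
  define cls where "cls v = {T. P T \<and> f T = v}" for v
  have "{T. P T \<and> rel S T} = cls (f S)" if "P S" for S
    using assms[OF that] by (auto simp: cls_def)
  then have "iso_types P rel = cls ` f ` {S. P S}"
    unfolding iso_types_def by auto
  moreover have "inj_on cls (f ` {S. P S})"
  proof (rule inj_onI)
    fix v w assume "v \<in> f ` {S. P S}" "cls v = cls w"
    then obtain S where "P S" "f S = v" "S \<in> cls w"
      by (auto simp: cls_def)
    then show "v = w"
      by (simp add: cls_def)
  qed
  ultimately show ?thesis
    by (simp add: card_image)
qed

text \<open>An invariant \<open>(U, Q)\<close> records the set of colours used and the relation ``some point of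
  colour \<open>i\<close> lies below some point of colour \<open>j\<close>''.\<close>

definition invariants :: "nat \<Rightarrow> (nat set \<times> (nat \<times> nat) set) set" where
  "invariants k = Sigma (Pow {..<k}) trans_total_rels"

lemma card_invariants: "card (invariants k) = (\<Sum>i=0..k. J i * (k choose i))"
proof -
  have "card (invariants k) = (\<Sum>U\<in>Pow {..<k}. card (trans_total_rels U))"
    unfolding invariants_def by (rule card_SigmaI) (auto intro: finite_trans_total_rels finite_subset)
  also have "\<dots> = (\<Sum>U\<in>Pow {..<k}. J (card U))"
    by (rule sum.cong) (auto intro: card_trans_total_rels finite_subset)
  finally show ?thesis
    using sum_Pow_by_card[of "{..<k}" J] by (simp add: mult.commute)
qed

lemma card_invariants_all_colours: "card {v \<in> invariants k. fst v = {..<k}} = J k"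
proof -
  have "{v \<in> invariants k. fst v = {..<k}} = Pair {..<k} ` trans_total_rels {..<k}"
    by (auto simp: invariants_def trans_total_rels_def)
  moreover have "inj_on (Pair {..<k}) (trans_total_rels {..<k})"
    by (rule inj_onI) simp
  ultimately show ?thesis
    by (metis card_image card_trans_total_rels finite_lessThan card_lessThan)
qed

locale invariant_pair =
  fixes k :: nat and U :: "nat set" and Q :: "(nat \<times> nat) set"
  assumes mem_invariants: "(U, Q) \<in> invariants k"
begin

lemma U_bound: "U \<subseteq> {..<k}"
  and Q_sub: "Q \<subseteq> U \<times> U" and Q_trans: "trans Q"
  and Q_total: "i \<in> U \<Longrightarrow> j \<in> U \<Longrightarrow> i \<noteq> j \<Longrightarrow> (i, j) \<in> Q \<or> (j, i) \<in> Q"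
  using mem_invariants trans_total_relsD[of Q U] by (auto simp: invariants_def)

lemma Q_transD: "(i, j) \<in> Q \<Longrightarrow> (j, l) \<in> Q \<Longrightarrow> (i, l) \<in> Q"
  using Q_trans by (rule transD)

lemma finite_U: "finite U"
  using U_bound finite_subset by blast

definition level :: "nat \<Rightarrow> nat" where
  "level i = card {j \<in> U. (j, i) \<in> Q \<and> (i, j) \<notin> Q}"

lemma level_less:
  assumes "i \<in> U" "(i, j) \<in> Q" "(j, i) \<notin> Q"
  shows "level i < level j"
proof -
  have "{l \<in> U. (l, i) \<in> Q \<and> (i, l) \<notin> Q} \<subset> {l \<in> U. (l, j) \<in> Q \<and> (j, l) \<notin> Q}"
    using assms Q_transD by blast
  then show ?thesis
    unfolding level_def using finite_U by (auto intro: psubset_card_mono)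
qed

lemma level_eq:
  assumes "(i, j) \<in> Q" "(j, i) \<in> Q"
  shows "level i = level j"
proof -
  have "{l \<in> U. (l, i) \<in> Q \<and> (i, l) \<notin> Q} = {l \<in> U. (l, j) \<in> Q \<and> (j, l) \<notin> Q}"
    using assms Q_transD by blast
  then show ?thesis
    by (simp add: level_def)
qed

lemma level_less_iff:
  assumes "i \<in> U" "j \<in> U"
  shows "level i < level j \<longleftrightarrow> (i, j) \<in> Q \<and> (j, i) \<notin> Q"
  using Q_total[OF assms] level_less[of i j] level_less[of j i] level_eq[of i j] assms
  by (cases "i = j") force+

lemma level_eq_iff:
  assumes "i \<in> U" "j \<in> U"
  shows "level i = level j \<longleftrightarrow> i = j \<or> ((i, j) \<in> Q \<and> (j, i) \<in> Q)"
  using Q_total[OF assms] level_less[of i j] level_less[of j i] level_eq[of i j] assms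
  by (cases "i = j") force+

lemma block_refl: "(i, j) \<in> Q \<Longrightarrow> (j, i) \<in> Q \<Longrightarrow> (i, i) \<in> Q"
  by (rule Q_transD)

lemma level_eq_irrefl:
  assumes "i \<in> U" "j \<in> U" "(i, i) \<notin> Q" "level i = level j"
  shows "j = i"
  using assms level_eq_iff block_refl by blast

lemma Q_iff_level:
  assumes "i \<in> U" "j \<in> U"
  shows "(i, j) \<in> Q \<longleftrightarrow> level i < level j \<or> (level i = level j \<and> (i, i) \<in> Q)"
proof (cases "(i, j) \<in> Q \<and> (j, i) \<in> Q")
  case True
  then show ?thesis
    using level_eq_iff[OF assms] block_refl by auto
next
  case False
  then show ?thesis
    using level_eq_iff[OF assms] level_less_iff[OF assms] by auto
qed

lemma refl_iff_level: "i \<in> U \<Longrightarrow> (i, i) \<in> Q \<longleftrightarrow> (\<exists>l\<in>U. (l, l) \<in> Q \<and> level l = level i)"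
  using level_eq_iff block_refl by blast

end

definition has_label :: "(nat \<Rightarrow> nat \<Rightarrow> bool) \<Rightarrow> (nat \<Rightarrow> nat \<Rightarrow> bool) \<Rightarrow> nat \<Rightarrow> nat \<Rightarrow> bool" where
  "has_label R S i x \<longleftrightarrow> R i x \<or> S i x"

definition labels :: "nat \<Rightarrow> nat set \<Rightarrow> (nat \<Rightarrow> nat \<Rightarrow> bool) \<Rightarrow> (nat \<Rightarrow> nat \<Rightarrow> bool) \<Rightarrow> nat set" where
  "labels k A R S = {i. i < k \<and> (\<exists>x\<in>A. has_label R S i x)}"

text \<open>In the invariant an \<open>S\<close>-point counts as a reflexive
  block and an \<open>R\<close>-point as an irreflexive one.\<close>

definition label_rel :: "nat \<Rightarrow> nat set \<Rightarrow> (nat \<Rightarrow> nat \<Rightarrow> bool) \<Rightarrow> (nat \<Rightarrow> nat \<Rightarrow> bool) \<Rightarrow>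
    (nat \<Rightarrow> nat \<Rightarrow> bool) \<Rightarrow> (nat \<times> nat) set" where
  "label_rel k A lt R S = {(i, j). i < k \<and> j < k \<and> (\<exists>x\<in>A. \<exists>y\<in>A. has_label R S i x \<and> has_label R S j y \<and>
      (lt x y \<or> (x = y \<and> (\<exists>l<k. S l x))))}"

definition model_invariant :: "nat \<Rightarrow> tstr \<Rightarrow> nat set \<times> (nat \<times> nat) set" where
  "model_invariant k M = (case M of (A, lt, R, S) \<Rightarrow> (labels k A R S, label_rel k A lt R S))"

definition labelled_point :: "nat set \<Rightarrow> (nat \<Rightarrow> nat \<Rightarrow> bool) \<Rightarrow> (nat \<Rightarrow> nat \<Rightarrow> bool) \<Rightarrow> nat \<Rightarrow> nat" where
  "labelled_point A R S i = (THE x. x \<in> A \<and> has_label R S i x)"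

locale T_model =
  fixes k :: nat and A :: "nat set" and lt :: "nat \<Rightarrow> nat \<Rightarrow> bool" and R S :: "nat \<Rightarrow> nat \<Rightarrow> bool"
  assumes model: "is_model_T k (A, lt, R, S)"
begin

abbreviation "pt \<equiv> labelled_point A R S"
abbreviation "Lab \<equiv> labels k A R S"
abbreviation "Rel \<equiv> label_rel k A lt R S"
abbreviation "S_point x \<equiv> \<exists>l<k. S l x"

lemma model_axioms:
  "strict_linear_on A lt"
  "\<forall>x\<in>A. (\<exists>i<k. R i x) \<or> (\<exists>i<k. S i x)"
  "\<forall>x\<in>A. \<forall>i<k. \<forall>j<k. R i x \<and> R j x \<longrightarrow> i = j"
  "\<forall>x\<in>A. \<forall>i<k. \<forall>j<k. \<not> (R i x \<and> S j x)"
  "\<forall>i<k. \<forall>x\<in>A. \<forall>y\<in>A. R i x \<and> R i y \<longrightarrow> x = y"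
  "\<forall>i<k. \<forall>x\<in>A. \<forall>y\<in>A. S i x \<and> S i y \<longrightarrow> x = y"
  "\<forall>i<k. \<not> ((\<exists>x\<in>A. R i x) \<and> (\<exists>x\<in>A. S i x))"
  using model by (simp_all add: is_model_T_def)

lemma irrefl: "x \<in> A \<Longrightarrow> \<not> lt x x"
  using model_axioms(1) unfolding strict_linear_on_def by blast

lemma trans: "x \<in> A \<Longrightarrow> y \<in> A \<Longrightarrow> z \<in> A \<Longrightarrow> lt x y \<Longrightarrow> lt y z \<Longrightarrow> lt x z"
  using model_axioms(1) unfolding strict_linear_on_def by blast

lemma total: "x \<in> A \<Longrightarrow> y \<in> A \<Longrightarrow> x \<noteq> y \<Longrightarrow> lt x y \<or> lt y x"
  using model_axioms(1) unfolding strict_linear_on_def by blast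

lemma labelled: "x \<in> A \<Longrightarrow> \<exists>i<k. has_label R S i x"
  using model_axioms(2) unfolding has_label_def by blast

lemma label_unique_point:
  "i < k \<Longrightarrow> x \<in> A \<Longrightarrow> y \<in> A \<Longrightarrow> has_label R S i x \<Longrightarrow> has_label R S i y \<Longrightarrow> x = y"
  using model_axioms(5-7) unfolding has_label_def by blast

lemma R_not_S: "x \<in> A \<Longrightarrow> i < k \<Longrightarrow> j < k \<Longrightarrow> R i x \<Longrightarrow> \<not> S j x"
  using model_axioms(4) by blast

lemma two_labels_S:
  "x \<in> A \<Longrightarrow> i < k \<Longrightarrow> j < k \<Longrightarrow> i \<noteq> j \<Longrightarrow> has_label R S i x \<Longrightarrow> has_label R S j x \<Longrightarrow> S i x"
  using model_axioms(3,4) unfolding has_label_def by blast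

lemma labels_bound: "Lab \<subseteq> {..<k}"
  unfolding labels_def by auto

lemma labelled_point: "i \<in> Lab \<Longrightarrow> pt i \<in> A \<and> has_label R S i (pt i)"
  unfolding labels_def labelled_point_def by (rule theI') (use label_unique_point in blast)

lemma has_label_iff: "x \<in> A \<Longrightarrow> i < k \<Longrightarrow> has_label R S i x \<longleftrightarrow> i \<in> Lab \<and> x = pt i"
  using labelled_point label_unique_point unfolding labels_def by blast

lemma points_labelled: "x \<in> A \<Longrightarrow> \<exists>i\<in>Lab. x = pt i"
  using labelled has_label_iff by blast

lemma label_rel_iff:
  assumes "i \<in> Lab" "j \<in> Lab"
  shows "(i, j) \<in> Rel \<longleftrightarrow> lt (pt i) (pt j) \<or> (pt i = pt j \<and> S_point (pt i))"
proof -
  have "i < k" "j < k"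
    using assms labels_bound by auto
  then show ?thesis
    using has_label_iff labelled_point[OF assms(1)] labelled_point[OF assms(2)]
    unfolding label_rel_def by blast
qed

lemma label_rel_sub: "Rel \<subseteq> Lab \<times> Lab"
  unfolding label_rel_def labels_def by blast

lemma same_point_iff:
  assumes "i \<in> Lab" "j \<in> Lab"
  shows "pt i = pt j \<longleftrightarrow> i = j \<or> ((i, j) \<in> Rel \<and> (j, i) \<in> Rel)"
proof
  assume e: "pt i = pt j"
  show "i = j \<or> ((i, j) \<in> Rel \<and> (j, i) \<in> Rel)"
  proof (cases "i = j")
    case False
    have "i < k" "j < k"
      using assms labels_bound by auto
    moreover have "pt i \<in> A" "has_label R S i (pt i)" "has_label R S j (pt i)"
      using labelled_point[OF assms(1)] labelled_point[OF assms(2)] e by auto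
    ultimately have "S_point (pt i)"
      using two_labels_S False by blast
    then have "(i, j) \<in> Rel" "(j, i) \<in> Rel"
      using label_rel_iff[OF assms] label_rel_iff[OF assms(2,1)] e by metis+
    then show ?thesis
      by blast
  qed blast
next
  assume h: "i = j \<or> ((i, j) \<in> Rel \<and> (j, i) \<in> Rel)"
  show "pt i = pt j"
  proof (rule ccontr)
    assume ne: "pt i \<noteq> pt j"
    then have "(i, j) \<in> Rel" "(j, i) \<in> Rel"
      using h by auto
    then have "lt (pt i) (pt j)" "lt (pt j) (pt i)"
      using label_rel_iff[OF assms] label_rel_iff[OF assms(2,1)] ne by auto
    then show False
      using trans[of "pt i" "pt j" "pt i"] irrefl labelled_point[OF assms(1)] labelled_point[OF assms(2)]
      by blast
  qed
qed

lemma less_iff: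
  assumes "i \<in> Lab" "j \<in> Lab"
  shows "lt (pt i) (pt j) \<longleftrightarrow> (i, j) \<in> Rel \<and> \<not> (i = j \<or> ((i, j) \<in> Rel \<and> (j, i) \<in> Rel))"
  using label_rel_iff[OF assms] same_point_iff[OF assms] irrefl labelled_point[OF assms(1)] by metis

lemma S_point_iff:
  assumes "i \<in> Lab"
  shows "S_point (pt i) \<longleftrightarrow> (i, i) \<in> Rel"
  using label_rel_iff[OF assms assms] irrefl labelled_point[OF assms] by blast

lemma R_iff: "x \<in> A \<Longrightarrow> l < k \<Longrightarrow> R l x \<longleftrightarrow> l \<in> Lab \<and> x = pt l \<and> (l, l) \<notin> Rel"
  using has_label_iff[of x l] S_point_iff[of l] R_not_S unfolding has_label_def by blast

lemma S_iff: "x \<in> A \<Longrightarrow> l < k \<Longrightarrow> S l x \<longleftrightarrow> l \<in> Lab \<and> x = pt l \<and> (l, l) \<in> Rel"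
  using has_label_iff[of x l] S_point_iff[of l] R_not_S unfolding has_label_def by blast

lemma model_invariant_mem: "model_invariant k (A, lt, R, S) \<in> invariants k"
proof -
  have "trans Rel"
  proof (rule transI)
    fix i j l assume a: "(i, j) \<in> Rel" "(j, l) \<in> Rel"
    then have u: "i \<in> Lab" "j \<in> Lab" "l \<in> Lab"
      using label_rel_sub by blast+
    have "lt (pt i) (pt j) \<or> (pt i = pt j \<and> S_point (pt i))"
      "lt (pt j) (pt l) \<or> (pt j = pt l \<and> S_point (pt j))"
      using a label_rel_iff[OF u(1,2)] label_rel_iff[OF u(2,3)] by blast+
    then have "lt (pt i) (pt l) \<or> (pt i = pt l \<and> S_point (pt i))"
      using trans[of "pt i" "pt j" "pt l"] labelled_point[OF u(1)] labelled_point[OF u(2)]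
        labelled_point[OF u(3)] by auto
    then show "(i, l) \<in> Rel"
      using label_rel_iff[OF u(1,3)] by blast
  qed
  moreover have "(i, j) \<in> Rel \<or> (j, i) \<in> Rel" if "i \<in> Lab" "j \<in> Lab" "i \<noteq> j" for i j
  proof (cases "pt i = pt j")
    case True
    then show ?thesis
      using same_point_iff[OF that(1,2)] that(3) by blast
  next
    case False
    then have "lt (pt i) (pt j) \<or> lt (pt j) (pt i)"
      using total labelled_point[OF that(1)] labelled_point[OF that(2)] by blast
    then show ?thesis
      using label_rel_iff[OF that(1,2)] label_rel_iff[OF that(2,1)] by blast
  qed
  ultimately show ?thesis
    using labels_bound label_rel_sub
    by (auto simp: model_invariant_def invariants_def trans_total_rels_def)
qed

end

lemma T_iso_sym:
  assumes "T_iso k (A, lt, R, S) (B, lt', R', S')"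
  shows "T_iso k (B, lt', R', S') (A, lt, R, S)"
proof -
  obtain f where f: "bij_betw f A B" "\<forall>x\<in>A. \<forall>y\<in>A. lt x y \<longleftrightarrow> lt' (f x) (f y)"
    "\<forall>i<k. \<forall>x\<in>A. R i x \<longleftrightarrow> R' i (f x)" "\<forall>i<k. \<forall>x\<in>A. S i x \<longleftrightarrow> S' i (f x)"
    using assms unfolding T_iso_def by auto
  define g where "g = inv_into A f"
  have g: "bij_betw g B A"
    unfolding g_def by (rule bij_betw_inv_into[OF f(1)])
  have fg: "y \<in> B \<Longrightarrow> f (g y) = y" and gB: "y \<in> B \<Longrightarrow> g y \<in> A" for y
    using f(1) g unfolding g_def by (auto simp: bij_betw_inv_into_right bij_betwE)
  show ?thesis
    unfolding T_iso_def prod.case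
  proof (intro exI[of _ g] conjI g ballI allI impI)
    fix x y assume "x \<in> B" "y \<in> B"
    then show "lt' x y \<longleftrightarrow> lt (g x) (g y)"
      using f(2) gB fg by metis
  next
    fix i x assume "i < k" "x \<in> B"
    then show "R' i x \<longleftrightarrow> R i (g x)" "S' i x \<longleftrightarrow> S i (g x)"
      using f(3,4) gB fg by metis+
  qed
qed

lemma T_iso_invariant_subset:
  assumes "T_iso k (A, lt, R, S) (B, lt', R', S')"
  shows "labels k A R S \<subseteq> labels k B R' S'" "label_rel k A lt R S \<subseteq> label_rel k B lt' R' S'"
proof -
  obtain f where f: "bij_betw f A B" "\<forall>x\<in>A. \<forall>y\<in>A. lt x y \<longleftrightarrow> lt' (f x) (f y)"
    "\<forall>i<k. \<forall>x\<in>A. R i x \<longleftrightarrow> R' i (f x)" "\<forall>i<k. \<forall>x\<in>A. S i x \<longleftrightarrow> S' i (f x)"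
    using assms unfolding T_iso_def by auto
  have fA: "x \<in> A \<Longrightarrow> f x \<in> B" for x
    using f(1) bij_betwE by blast
  have lab: "i < k \<Longrightarrow> x \<in> A \<Longrightarrow> has_label R S i x \<longleftrightarrow> has_label R' S' i (f x)" for i x
    using f(3,4) by (simp add: has_label_def)
  show "labels k A R S \<subseteq> labels k B R' S'"
    unfolding labels_def using lab fA by blast
  show "label_rel k A lt R S \<subseteq> label_rel k B lt' R' S'"
  proof
    fix p assume "p \<in> label_rel k A lt R S"
    then obtain i j x y where p: "p = (i, j)" "i < k" "j < k" "x \<in> A" "y \<in> A"
      "has_label R S i x" "has_label R S j y" "lt x y \<or> (x = y \<and> (\<exists>l<k. S l x))"
      unfolding label_rel_def by blast
    have "lt' (f x) (f y) \<or> (f x = f y \<and> (\<exists>l<k. S' l (f x)))"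
      using p(4,5,8) f(2,4) by blast
    then show "p \<in> label_rel k B lt' R' S'"
      unfolding label_rel_def using p lab fA by blast
  qed
qed

lemma T_iso_imp_eq_invariant: "T_iso k M N \<Longrightarrow> model_invariant k M = model_invariant k N"
  using T_iso_invariant_subset T_iso_sym
  by (cases M, cases N) (fastforce simp: model_invariant_def)

lemma eq_invariant_imp_T_iso:
  assumes M: "is_model_T k (A, lt, R, S)" and N: "is_model_T k (B, lt', R', S')"
    and eq: "model_invariant k (A, lt, R, S) = model_invariant k (B, lt', R', S')"
  shows "T_iso k (A, lt, R, S) (B, lt', R', S')"
proof -
  interpret m: T_model k A lt R S by (rule T_model.intro[OF M])
  interpret n: T_model k B lt' R' S' by (rule T_model.intro[OF N])
  define I p q where "I = m.Lab" and "p = m.pt" and "q = n.pt"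
  have I: "n.Lab = I" "n.Rel = m.Rel"
    using eq by (auto simp: model_invariant_def I_def)
  have A: "A = p ` I" and pA: "i \<in> I \<Longrightarrow> p i \<in> A" for i
    using m.points_labelled m.labelled_point unfolding p_def I_def by blast+
  have B: "B = q ` I" and qB: "i \<in> I \<Longrightarrow> q i \<in> B" for i
    using n.points_labelled n.labelled_point I(1) unfolding q_def by blast+
  have same: "p i = p j \<longleftrightarrow> q i = q j" if "i \<in> I" "j \<in> I" for i j
    using m.same_point_iff n.same_point_iff that I unfolding p_def q_def I_def by simp
  have less: "lt (p i) (p j) \<longleftrightarrow> lt' (q i) (q j)" if "i \<in> I" "j \<in> I" for i j
    using m.less_iff n.less_iff that I unfolding p_def q_def I_def by simp
  have R: "R l (p i) \<longleftrightarrow> R' l (q i)" and S: "S l (p i) \<longleftrightarrow> S' l (q i)" if "i \<in> I" "l < k" for i l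
    using m.R_iff[OF pA[OF that(1)] that(2)] n.R_iff[OF qB[OF that(1)] that(2)]
      m.S_iff[OF pA[OF that(1)] that(2)] n.S_iff[OF qB[OF that(1)] that(2)] same[OF that(1)] I
    unfolding p_def q_def I_def by auto
  define f where "f x = q (SOME i. i \<in> I \<and> x = p i)" for x
  have f_p: "f (p i) = q i" if "i \<in> I" for i
  proof -
    have "\<exists>j. j \<in> I \<and> p i = p j"
      using that by blast
    from someI_ex[OF this] show ?thesis
      unfolding f_def using same that by metis
  qed
  have "inj_on f A"
  proof (rule inj_onI)
    fix x y assume "x \<in> A" "y \<in> A" "f x = f y"
    then obtain i j where "i \<in> I" "j \<in> I" "x = p i" "y = p j"
      unfolding A by blast
    then show "x = y"
      using \<open>f x = f y\<close> f_p same by simp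
  qed
  moreover have "f ` A = B"
    unfolding A B image_image using f_p by (rule image_cong[OF refl])
  ultimately show ?thesis
    unfolding T_iso_def prod.case A
    using less R S f_p by (intro exI[of _ f]) (simp add: bij_betw_def)
qed

context invariant_pair
begin

definition canonical_R :: "nat \<Rightarrow> nat \<Rightarrow> bool" where
  "canonical_R i x \<longleftrightarrow> i \<in> U \<and> (i, i) \<notin> Q \<and> x = level i"

definition canonical_S :: "nat \<Rightarrow> nat \<Rightarrow> bool" where
  "canonical_S i x \<longleftrightarrow> i \<in> U \<and> (i, i) \<in> Q \<and> x = level i"

definition canonical_model :: tstr where
  "canonical_model = (level ` U, (<), canonical_R, canonical_S)"

lemma canonical_model_is_model: "is_model_T k canonical_model"
  unfolding is_model_T_def canonical_model_def prod.case canonical_R_def canonical_S_def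
proof (intro conjI allI ballI impI notI)
  show "strict_linear_on (level ` U) (<)"
    by (auto simp: strict_linear_on_def)
  fix x assume "x \<in> level ` U"
  then obtain i where i: "i \<in> U" "x = level i"
    by blast
  then show "(\<exists>j<k. j \<in> U \<and> (j, j) \<notin> Q \<and> x = level j) \<or> (\<exists>j<k. j \<in> U \<and> (j, j) \<in> Q \<and> x = level j)"
    using U_bound by blast
  fix j l assume "j < k" "l < k"
  show "(j \<in> U \<and> (j, j) \<notin> Q \<and> x = level j) \<and> (l \<in> U \<and> (l, l) \<notin> Q \<and> x = level l) \<Longrightarrow> j = l"
    using level_eq_irrefl by metis
  show "(j \<in> U \<and> (j, j) \<notin> Q \<and> x = level j) \<and> (l \<in> U \<and> (l, l) \<in> Q \<and> x = level l) \<Longrightarrow> False"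
    using level_eq_irrefl by metis
qed auto

lemma model_invariant_canonical_model: "model_invariant k canonical_model = (U, Q)"
proof -
  have lab: "has_label canonical_R canonical_S i x \<longleftrightarrow> i \<in> U \<and> x = level i" for i x
    by (auto simp: has_label_def canonical_R_def canonical_S_def)
  have "labels k (level ` U) canonical_R canonical_S = U"
    using U_bound by (auto simp: labels_def lab)
  moreover have "label_rel k (level ` U) (<) canonical_R canonical_S = Q"
  proof (rule set_eqI, clarify)
    fix i j
    have "(i, j) \<in> label_rel k (level ` U) (<) canonical_R canonical_S \<longleftrightarrow>
        i \<in> U \<and> j \<in> U \<and> (level i < level j \<or> (level i = level j \<and> (\<exists>l\<in>U. (l, l) \<in> Q \<and> level l = level i)))"
      using U_bound unfolding label_rel_def lab by (auto simp: canonical_S_def)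
    also have "\<dots> \<longleftrightarrow> (i, j) \<in> Q"
      using Q_iff_level refl_iff_level Q_sub by blast
    finally show "(i, j) \<in> label_rel k (level ` U) (<) canonical_R canonical_S \<longleftrightarrow> (i, j) \<in> Q" .
  qed
  ultimately show ?thesis
    by (simp add: model_invariant_def canonical_model_def)
qed

end

lemma num_models_T_eq_card_invariants: "num_models_T k = card (invariants k)"
proof -
  have "num_models_T k = card (model_invariant k ` {M. is_model_T k M})"
    unfolding num_models_T_def
    by (rule card_iso_types_complete_invariant)
      (metis T_iso_imp_eq_invariant eq_invariant_imp_T_iso prod_cases4)
  also have "model_invariant k ` {M. is_model_T k M} = invariants k"
  proof
    show "model_invariant k ` {M. is_model_T k M} \<subseteq> invariants k"
      using T_model.model_invariant_mem T_model.intro by auto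
    show "invariants k \<subseteq> model_invariant k ` {M. is_model_T k M}"
      using invariant_pair.canonical_model_is_model invariant_pair.model_invariant_canonical_model
        invariant_pair.intro by (metis (mono_tags, lifting) image_eqI mem_Collect_eq subrelI)
  qed
  finally show ?thesis .
qed

section \<open>Back and forth\<close>

definition partial_iso :: "('a \<Rightarrow> 'a \<Rightarrow> bool) \<Rightarrow> ('a \<Rightarrow> 'c) \<Rightarrow> ('b \<Rightarrow> 'b \<Rightarrow> bool) \<Rightarrow> ('b \<Rightarrow> 'c) \<Rightarrow>
    ('a \<times> 'b) set \<Rightarrow> bool" where
  "partial_iso lt c lt' c' G \<longleftrightarrow>
     (\<forall>(x, y)\<in>G. \<forall>(x', y')\<in>G. (x = x' \<longleftrightarrow> y = y') \<and> (lt x x' \<longleftrightarrow> lt' y y') \<and> c x = c' y)"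

definition extension_property :: "'a set \<Rightarrow> ('a \<Rightarrow> 'a \<Rightarrow> bool) \<Rightarrow> ('a \<Rightarrow> 'c) \<Rightarrow>
    'b set \<Rightarrow> ('b \<Rightarrow> 'b \<Rightarrow> bool) \<Rightarrow> ('b \<Rightarrow> 'c) \<Rightarrow> bool" where
  "extension_property A lt c B lt' c' \<longleftrightarrow>
     (\<forall>G. finite G \<and> G \<subseteq> A \<times> B \<and> partial_iso lt c lt' c' G \<longrightarrow>
        (\<forall>a\<in>A. \<exists>b\<in>B. partial_iso lt c lt' c' (insert (a, b) G)))"

lemma partial_isoD:
  assumes "partial_iso lt c lt' c' G" "(x, y) \<in> G" "(x', y') \<in> G"
  shows "(x = x' \<longleftrightarrow> y = y') \<and> (lt x x' \<longleftrightarrow> lt' y y') \<and> c x = c' y"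
proof -
  from assms(1,2) have "\<forall>(x', y')\<in>G. (x = x' \<longleftrightarrow> y = y') \<and> (lt x x' \<longleftrightarrow> lt' y y') \<and> c x = c' y"
    unfolding partial_iso_def by auto
  with assms(3) show ?thesis
    by auto
qed

lemma partial_isoI:
  assumes "\<And>x y x' y'. (x, y) \<in> G \<Longrightarrow> (x', y') \<in> G \<Longrightarrow>
    (x = x' \<longleftrightarrow> y = y') \<and> (lt x x' \<longleftrightarrow> lt' y y') \<and> c x = c' y"
  shows "partial_iso lt c lt' c' G"
  using assms unfolding partial_iso_def by auto

lemma partial_iso_converse:
  assumes "partial_iso lt c lt' c' G"
  shows "partial_iso lt' c' lt c (converse G)"
proof (rule partial_isoI)
  fix y x y' x' assume "(y, x) \<in> G\<inverse>" "(y', x') \<in> G\<inverse>"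
  then show "(y = y' \<longleftrightarrow> x = x') \<and> (lt' y y' \<longleftrightarrow> lt x x') \<and> c' y = c x"
    using partial_isoD[OF assms, of x y x' y'] by auto
qed

lemma partial_iso_insert:
  assumes "partial_iso lt c lt' c' G"
    and "\<forall>(x, y)\<in>G. x \<noteq> a \<and> y \<noteq> b \<and> (lt x a \<longleftrightarrow> lt' y b) \<and> (lt a x \<longleftrightarrow> lt' b y)"
    and "lt a a \<longleftrightarrow> lt' b b" "c a = c' b"
  shows "partial_iso lt c lt' c' (insert (a, b) G)"
  using assms unfolding partial_iso_def by auto

lemma extension_property_back:
  assumes "extension_property B lt' c' A lt c" "finite G" "G \<subseteq> A \<times> B" "partial_iso lt c lt' c' G" "b \<in> B"
  shows "\<exists>a\<in>A. partial_iso lt c lt' c' (insert (a, b) G)"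
proof -
  have "finite (converse G) \<and> converse G \<subseteq> B \<times> A \<and> partial_iso lt' c' lt c (converse G)"
    using assms(2-4) partial_iso_converse by blast
  from assms(1)[unfolded extension_property_def, rule_format, OF this assms(5)]
  obtain a where "a \<in> A" "partial_iso lt' c' lt c (insert (b, a) (converse G))" ..
  moreover have "converse (insert (b, a) (converse G)) = insert (a, b) G"
    by auto
  ultimately show ?thesis
    using partial_iso_converse by metis
qed

lemma partial_iso_total_imp_iso:
  assumes G: "G \<subseteq> A \<times> B" "partial_iso lt c lt' c' G" and total: "A \<subseteq> Domain G" "B \<subseteq> Range G"
  shows "\<exists>f. clo_iso_on lt c A lt' c' B f \<and> (\<forall>(x, y)\<in>G. f x = y)"
proof -
  note pG = partial_isoD[OF G(2)]
  define f where "f x = (SOME y. (x, y) \<in> G)" for x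
  have fG: "f x = y" if "(x, y) \<in> G" for x y
  proof -
    have "(x, f x) \<in> G"
      unfolding f_def using that by (rule someI)
    then show ?thesis
      using pG[OF that \<open>(x, f x) \<in> G\<close>] by simp
  qed
  have fA: "(x, f x) \<in> G" if "x \<in> A" for x
    using total(1) that fG by blast
  have "inj_on f A"
  proof (rule inj_onI)
    fix x x' assume "x \<in> A" "x' \<in> A" "f x = f x'"
    then show "x = x'"
      using pG[OF fA fA] by simp
  qed
  moreover have "f ` A = B"
  proof
    show "f ` A \<subseteq> B"
      using fA G(1) by blast
    show "B \<subseteq> f ` A"
    proof
      fix y assume "y \<in> B"
      then obtain x where "(x, y) \<in> G"
        using total(2) by blast
      then show "y \<in> f ` A"
        using G(1) fG by force
    qed
  qed
  moreover have "lt x y \<longleftrightarrow> lt' (f x) (f y)" "c' (f x) = c x" if "x \<in> A" "y \<in> A" for x y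
    using pG[OF fA[OF that(1)] fA[OF that(2)]] by auto
  ultimately show ?thesis
    using fG unfolding clo_iso_on_def bij_betw_def by blast
qed

lemma partial_iso_Union_chain:
  fixes G :: "nat \<Rightarrow> ('a \<times> 'b) set"
  assumes "mono G" "\<And>n. partial_iso lt c lt' c' (G n)"
  shows "partial_iso lt c lt' c' (\<Union>n. G n)"
proof (rule partial_isoI)
  fix x y x' y' assume "(x, y) \<in> (\<Union>n. G n)" "(x', y') \<in> (\<Union>n. G n)"
  then obtain m n where "(x, y) \<in> G m" "(x', y') \<in> G n"
    by blast
  moreover have "G m \<subseteq> G (max m n)" "G n \<subseteq> G (max m n)"
    using assms(1) by (simp_all add: monoD)
  ultimately have "(x, y) \<in> G (max m n)" "(x', y') \<in> G (max m n)"
    by blast+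
  then show "(x = x' \<longleftrightarrow> y = y') \<and> (lt x x' \<longleftrightarrow> lt' y y') \<and> c x = c' y"
    by (rule partial_isoD[OF assms(2)])
qed

lemma back_and_forth_step:
  assumes forward: "extension_property A lt c B lt' c'" and backward: "extension_property B lt' c' A lt c"
    and G: "finite G" "G \<subseteq> A \<times> B" "partial_iso lt c lt' c' G"
  shows "\<exists>G'. finite G' \<and> G' \<subseteq> A \<times> B \<and> partial_iso lt c lt' c' G' \<and> G \<subseteq> G' \<and>
    (a \<in> A \<longrightarrow> a \<in> Domain G') \<and> (b \<in> B \<longrightarrow> b \<in> Range G')"
proof -
  obtain G1 where G1: "finite G1" "G1 \<subseteq> A \<times> B" "partial_iso lt c lt' c' G1" "G \<subseteq> G1"
    "a \<in> A \<longrightarrow> a \<in> Domain G1"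
  proof (cases "a \<in> A")
    case True
    from forward[unfolded extension_property_def, rule_format, OF _ True] G
    obtain b' where "b' \<in> B" "partial_iso lt c lt' c' (insert (a, b') G)"
      by blast
    with that[of "insert (a, b') G"] G True show ?thesis
      by blast
  qed (use G in blast)
  obtain G2 where G2: "finite G2" "G2 \<subseteq> A \<times> B" "partial_iso lt c lt' c' G2" "G1 \<subseteq> G2"
    "b \<in> B \<longrightarrow> b \<in> Range G2"
  proof (cases "b \<in> B")
    case True
    from extension_property_back[OF backward G1(1-3) True]
    obtain a' where "a' \<in> A" "partial_iso lt c lt' c' (insert (a', b) G1)"
      by blast
    with that[of "insert (a', b) G1"] G1 True show ?thesis
      by blast
  qed (use G1 in blast)
  show ?thesis
    using G1 G2 by (intro exI[of _ G2]) auto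
qed

text \<open>The carriers are sets of naturals, so the \<open>n\<close>-th back-and-forth step can simply treat the
  element \<open>n\<close> on both sides.\<close>

theorem back_and_forth:
  assumes forward: "extension_property A lt c B lt' c'" and backward: "extension_property B lt' c' A lt c"
    and G0: "finite G0" "G0 \<subseteq> A \<times> B" "partial_iso lt c lt' c' G0"
  shows "\<exists>f. clo_iso_on lt c A lt' c' B f \<and> (\<forall>(x, y)\<in>G0. f x = y)"
proof -
  define good where "good G \<longleftrightarrow> finite G \<and> G \<subseteq> A \<times> B \<and> partial_iso lt c lt' c' G" for G
  have "\<forall>G n. \<exists>G'. good G \<longrightarrow> good G' \<and> G \<subseteq> G' \<and> (n \<in> A \<longrightarrow> n \<in> Domain G') \<and> (n \<in> B \<longrightarrow> n \<in> Range G')"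
  proof (intro allI)
    fix G n
    show "\<exists>G'. good G \<longrightarrow> good G' \<and> G \<subseteq> G' \<and> (n \<in> A \<longrightarrow> n \<in> Domain G') \<and> (n \<in> B \<longrightarrow> n \<in> Range G')"
      using back_and_forth_step[OF forward backward, of G n n] unfolding good_def by blast
  qed
  then obtain step where step: "\<And>G n. good G \<Longrightarrow> good (step G n) \<and> G \<subseteq> step G n \<and>
      (n \<in> A \<longrightarrow> n \<in> Domain (step G n)) \<and> (n \<in> B \<longrightarrow> n \<in> Range (step G n))"
    by metis
  define seq where "seq = rec_nat G0 (\<lambda>n G. step G n)"
  have seq_simps: "seq 0 = G0" "seq (Suc n) = step (seq n) n" for n
    unfolding seq_def by simp_all
  have good_seq: "good (seq n)" for n
    by (induction n) (use G0 step in \<open>auto simp: seq_simps good_def\<close>)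
  have "mono seq"
    by (rule incseq_SucI) (use step good_seq in \<open>simp add: seq_simps\<close>)
  then have "partial_iso lt c lt' c' (\<Union>n. seq n)"
    using good_seq unfolding good_def by (blast intro: partial_iso_Union_chain)
  moreover have "(\<Union>n. seq n) \<subseteq> A \<times> B"
    using good_seq unfolding good_def by blast
  moreover have "A \<subseteq> Domain (\<Union>n. seq n)"
  proof
    fix n assume "n \<in> A"
    then have "n \<in> Domain (seq (Suc n))"
      using step[OF good_seq[of n], of n] by (simp add: seq_simps)
    then show "n \<in> Domain (\<Union>n. seq n)"
      by blast
  qed
  moreover have "B \<subseteq> Range (\<Union>n. seq n)"
  proof
    fix n assume "n \<in> B"
    then have "n \<in> Range (seq (Suc n))"
      using step[OF good_seq[of n], of n] by (simp add: seq_simps)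
    then show "n \<in> Range (\<Union>n. seq n)"
      by blast
  qed
  ultimately obtain f where f: "clo_iso_on lt c A lt' c' B f" "\<forall>(x, y)\<in>(\<Union>n. seq n). f x = y"
    using partial_iso_total_imp_iso by metis
  have "G0 \<subseteq> (\<Union>n. seq n)"
    using seq_simps(1) by blast
  with f show ?thesis
    by fastforce
qed

lemma extension_property_from_interpolation:
  assumes total: "\<And>x y. x \<in> A \<Longrightarrow> y \<in> A \<Longrightarrow> x \<noteq> y \<Longrightarrow> lt x y \<or> lt y x"
    and asym: "\<And>x y. x \<in> A \<Longrightarrow> y \<in> A \<Longrightarrow> lt x y \<Longrightarrow> \<not> lt y x"
      "\<And>x y. x \<in> B \<Longrightarrow> y \<in> B \<Longrightarrow> lt' x y \<Longrightarrow> \<not> lt' y x"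
    and interpolation: "\<And>G a. finite G \<Longrightarrow> G \<subseteq> A \<times> B \<Longrightarrow> partial_iso lt c lt' c' G \<Longrightarrow> a \<in> A \<Longrightarrow>
      a \<notin> fst ` G \<Longrightarrow> \<exists>b\<in>B. c' b = c a \<and> (\<forall>(x, y)\<in>G. (lt x a \<longrightarrow> lt' y b) \<and> (lt a x \<longrightarrow> lt' b y))"
  shows "extension_property A lt c B lt' c'"
  unfolding extension_property_def
proof (intro allI impI ballI, elim conjE)
  fix G a assume G: "finite G" "G \<subseteq> A \<times> B" "partial_iso lt c lt' c' G" and a: "a \<in> A"
  show "\<exists>b\<in>B. partial_iso lt c lt' c' (insert (a, b) G)"
  proof (cases "a \<in> fst ` G")
    case True
    then obtain b where "(a, b) \<in> G"
      by force
    then show ?thesis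
      using G by (intro bexI[of _ b]) (auto simp: insert_absorb)
  next
    case False
    obtain b where b: "b \<in> B" "c' b = c a" "\<forall>(x, y)\<in>G. (lt x a \<longrightarrow> lt' y b) \<and> (lt a x \<longrightarrow> lt' b y)"
      using interpolation[OF G a False] by blast
    have sides: "x \<noteq> a \<and> y \<noteq> b \<and> (lt x a \<longleftrightarrow> lt' y b) \<and> (lt a x \<longleftrightarrow> lt' b y)"
      if xy: "(x, y) \<in> G" for x y
    proof -
      have "x \<in> A" "y \<in> B" "x \<noteq> a"
        using G(2) xy False by force+
      moreover have "lt x a \<or> lt a x"
        using total calculation a by blast
      moreover have "(lt x a \<longrightarrow> lt' y b) \<and> (lt a x \<longrightarrow> lt' b y)"
        using b(3) xy by blast
      ultimately show ?thesis
        using asym a b(1) by metis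
    qed
    have "lt a a \<longleftrightarrow> lt' b b"
      using asym a b(1) by blast
    moreover have "\<forall>(x, y)\<in>G. x \<noteq> a \<and> y \<noteq> b \<and> (lt x a \<longleftrightarrow> lt' y b) \<and> (lt a x \<longleftrightarrow> lt' b y)"
      using sides by auto
    ultimately have "partial_iso lt c lt' c' (insert (a, b) G)"
      using partial_iso_insert[OF G(3)] b(2) by simp
    then show ?thesis
      using b(1) by blast
  qed
qed

lemma extension_property_imp_homogeneous:
  assumes "extension_property A lt c A lt c"
  shows "clo_homogeneous (A, lt, c)"
  unfolding clo_homogeneous_def prod.case
proof (intro allI impI, elim conjE)
  fix X Y p assume X: "finite X" "X \<subseteq> A" "Y \<subseteq> A" and p: "clo_iso_on lt c X lt c Y p"
  have "p ` X \<subseteq> A"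
    using p X(3) unfolding clo_iso_on_def bij_betw_def by blast
  moreover have "partial_iso lt c lt c ((\<lambda>x. (x, p x)) ` X)"
    using p unfolding clo_iso_on_def bij_betw_def inj_on_def partial_iso_def by auto
  ultimately obtain g where "clo_iso_on lt c A lt c A g" "\<forall>(x, y)\<in>(\<lambda>x. (x, p x)) ` X. g x = y"
    using back_and_forth[OF assms assms, of "(\<lambda>x. (x, p x)) ` X"] X by blast
  then show "\<exists>g. clo_iso_on lt c A lt c A g \<and> (\<forall>x\<in>X. g x = p x)"
    by auto
qed

lemma partial_iso_pullback_iff:
  assumes "inj_on f A" "G \<subseteq> A \<times> A"
  shows "partial_iso (\<lambda>u v. lt (f u) (f v)) (\<lambda>u. c (f u)) (\<lambda>u v. lt (f u) (f v)) (\<lambda>u. c (f u)) G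
    \<longleftrightarrow> partial_iso lt c lt c (map_prod f f ` G)"
proof -
  have inj: "(f x = f x' \<longleftrightarrow> f y = f y') \<longleftrightarrow> (x = x' \<longleftrightarrow> y = y')"
    if "(x, y) \<in> G" "(x', y') \<in> G" for x y x' y'
  proof -
    have "x \<in> A" "y \<in> A" "x' \<in> A" "y' \<in> A"
      using assms(2) that by auto
    then show ?thesis
      by (simp add: inj_on_eq_iff[OF assms(1)])
  qed
  show ?thesis
  proof
    assume iso: "partial_iso (\<lambda>u v. lt (f u) (f v)) (\<lambda>u. c (f u)) (\<lambda>u v. lt (f u) (f v)) (\<lambda>u. c (f u)) G"
    show "partial_iso lt c lt c (map_prod f f ` G)"
      unfolding partial_iso_def
    proof (intro ballI, clarify)
      fix x y x' y' assume "(x, y) \<in> G" "(x', y') \<in> G"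
      then show "(f x = f x' \<longleftrightarrow> f y = f y') \<and> (lt (f x) (f x') \<longleftrightarrow> lt (f y) (f y')) \<and> c (f x) = c (f y)"
        using partial_isoD[OF iso] inj by simp
    qed
  next
    assume iso: "partial_iso lt c lt c (map_prod f f ` G)"
    show "partial_iso (\<lambda>u v. lt (f u) (f v)) (\<lambda>u. c (f u)) (\<lambda>u v. lt (f u) (f v)) (\<lambda>u. c (f u)) G"
    proof (rule partial_isoI)
      fix x y x' y' assume xy: "(x, y) \<in> G" "(x', y') \<in> G"
      then have "(f x, f y) \<in> map_prod f f ` G" "(f x', f y') \<in> map_prod f f ` G"
        by force+
      then show "(x = x' \<longleftrightarrow> y = y') \<and> (lt (f x) (f x') \<longleftrightarrow> lt (f y) (f y')) \<and> c (f x) = c (f y)"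
        using partial_isoD[OF iso, of "f x" "f y" "f x'" "f y'"] inj[OF xy] by simp
    qed
  qed
qed

lemma extension_property_pullback:
  assumes ext: "extension_property B lt c B lt c" and f: "bij_betw f A B"
  shows "extension_property A (\<lambda>u v. lt (f u) (f v)) (\<lambda>u. c (f u)) A (\<lambda>u v. lt (f u) (f v)) (\<lambda>u. c (f u))"
  unfolding extension_property_def
proof (intro allI impI ballI, elim conjE)
  fix G a assume G: "finite G" "G \<subseteq> A \<times> A" and a: "a \<in> A"
    and iso: "partial_iso (\<lambda>u v. lt (f u) (f v)) (\<lambda>u. c (f u)) (\<lambda>u v. lt (f u) (f v)) (\<lambda>u. c (f u)) G"
  have inj: "inj_on f A" and fA: "f ` A = B"
    using f by (auto simp: bij_betw_def)
  have "map_prod f f ` G \<subseteq> B \<times> B"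
    using G(2) fA by auto
  then have image: "finite (map_prod f f ` G) \<and> map_prod f f ` G \<subseteq> B \<times> B \<and> partial_iso lt c lt c (map_prod f f ` G)"
    using G(1) partial_iso_pullback_iff[OF inj G(2), THEN iffD1, OF iso] by blast
  have "f a \<in> B"
    using a fA by blast
  from ext[unfolded extension_property_def, rule_format, OF image this]
  obtain b where "b \<in> B" "partial_iso lt c lt c (insert (f a, b) (map_prod f f ` G))" ..
  moreover obtain b' where b': "b' \<in> A" "b = f b'"
    using \<open>b \<in> B\<close> fA by blast
  ultimately have "partial_iso lt c lt c (map_prod f f ` insert (a, b') G)"
    by simp
  moreover have "insert (a, b') G \<subseteq> A \<times> A"
    using G(2) a b'(1) by blast
  ultimately have "partial_iso (\<lambda>u v. lt (f u) (f v)) (\<lambda>u. c (f u)) (\<lambda>u v. lt (f u) (f v)) (\<lambda>u. c (f u))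
      (insert (a, b') G)"
    using partial_iso_pullback_iff[OF inj] by blast
  then show "\<exists>b\<in>A. partial_iso (\<lambda>u v. lt (f u) (f v)) (\<lambda>u. c (f u)) (\<lambda>u v. lt (f u) (f v)) (\<lambda>u. c (f u))
      (insert (a, b) G)"
    using b'(1) by blast
qed

definition clo_invariant :: "clo \<Rightarrow> nat set \<times> (nat \<times> nat) set" where
  "clo_invariant S = (case S of (A, lt, c) \<Rightarrow> (c ` A, {(c x, c y) | x y. x \<in> A \<and> y \<in> A \<and> lt x y}))"

lemma clo_iso_imp_eq_invariant:
  assumes "clo_iso S T"
  shows "clo_invariant S = clo_invariant T"
proof -
  obtain A lt c B lt' c' where S: "S = (A, lt, c)" and T: "T = (B, lt', c')"
    by (cases S, cases T) auto
  then obtain f where f: "bij_betw f A B" "\<forall>x\<in>A. \<forall>y\<in>A. lt x y \<longleftrightarrow> lt' (f x) (f y)" "\<forall>x\<in>A. c' (f x) = c x"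
    using assms unfolding clo_iso_def clo_iso_on_def by auto
  have B: "B = f ` A"
    using f(1) by (simp add: bij_betw_def)
  have "{(c' x, c' y) | x y. x \<in> B \<and> y \<in> B \<and> lt' x y}
      = {(c' (f x), c' (f y)) | x y. x \<in> A \<and> y \<in> A \<and> lt' (f x) (f y)}"
    unfolding B by blast
  also have "\<dots> = {(c x, c y) | x y. x \<in> A \<and> y \<in> A \<and> lt x y}"
  proof (rule Collect_cong)
    fix u
    show "(\<exists>x y. u = (c' (f x), c' (f y)) \<and> x \<in> A \<and> y \<in> A \<and> lt' (f x) (f y)) \<longleftrightarrow>
        (\<exists>x y. u = (c x, c y) \<and> x \<in> A \<and> y \<in> A \<and> lt x y)"
      using f(2,3) by metis
  qed
  finally have "{(c' x, c' y) | x y. x \<in> B \<and> y \<in> B \<and> lt' x y} = {(c x, c y) | x y. x \<in> A \<and> y \<in> A \<and> lt x y}" .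
  moreover have "c' ` B = c ` A"
    unfolding B image_image using f(3) by simp
  ultimately show ?thesis
    by (simp add: S T clo_invariant_def)
qed

lemma strict_linear_has_greatest:
  assumes "strict_linear_on B lt" "finite V" "V \<noteq> {}" "V \<subseteq> B"
  shows "\<exists>m\<in>V. \<forall>x\<in>V. x \<noteq> m \<longrightarrow> lt x m"
  using assms unfolding strict_linear_on_def
  by (intro finite_total_trans_has_greatest) blast+

lemma strict_linear_has_least:
  assumes "strict_linear_on B lt" "finite V" "V \<noteq> {}" "V \<subseteq> B"
  shows "\<exists>m\<in>V. \<forall>x\<in>V. x \<noteq> m \<longrightarrow> lt m x"
  using assms unfolding strict_linear_on_def
  by (intro finite_total_trans_has_greatest[where r = "\<lambda>x y. lt y x"]) blast+

locale hclo =
  fixes k :: nat and A :: "nat set" and lt :: "nat \<Rightarrow> nat \<Rightarrow> bool" and c :: "nat \<Rightarrow> nat"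
  assumes hclo: "is_hclo k (A, lt, c)"
begin

lemma linear: "strict_linear_on A lt"
  and colour_bound: "x \<in> A \<Longrightarrow> c x < k"
  using hclo by (simp_all add: is_hclo_def is_clo_def)

lemma irrefl: "x \<in> A \<Longrightarrow> \<not> lt x x"
  using linear unfolding strict_linear_on_def by blast

lemma trans: "x \<in> A \<Longrightarrow> y \<in> A \<Longrightarrow> z \<in> A \<Longrightarrow> lt x y \<Longrightarrow> lt y z \<Longrightarrow> lt x z"
  using linear unfolding strict_linear_on_def by blast

lemma total: "x \<in> A \<Longrightarrow> y \<in> A \<Longrightarrow> x \<noteq> y \<Longrightarrow> lt x y \<or> lt y x"
  using linear unfolding strict_linear_on_def by blast

lemma asym: "x \<in> A \<Longrightarrow> y \<in> A \<Longrightarrow> lt x y \<Longrightarrow> \<not> lt y x"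
  using irrefl trans by blast

lemma homogeneous:
  "finite X \<Longrightarrow> X \<subseteq> A \<Longrightarrow> Y \<subseteq> A \<Longrightarrow> clo_iso_on lt c X lt c Y p \<Longrightarrow>
    \<exists>g. clo_iso_on lt c A lt c A g \<and> (\<forall>x\<in>X. g x = p x)"
  using hclo unfolding is_hclo_def clo_homogeneous_def by blast

lemma automorphismD:
  assumes "clo_iso_on lt c A lt c A g" "x \<in> A"
  shows "g x \<in> A" "y \<in> A \<Longrightarrow> lt x y \<longleftrightarrow> lt (g x) (g y)" "c (g x) = c x"
  using assms unfolding clo_iso_on_def bij_betw_def by auto

lemma automorphism_moving_point:
  assumes "u \<in> A" "u' \<in> A" "c u = c u'"
  shows "\<exists>g. clo_iso_on lt c A lt c A g \<and> g u = u'"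
proof -
  have "clo_iso_on lt c {u} lt c {u'} (\<lambda>_. u')"
    unfolding clo_iso_on_def using assms irrefl by (auto simp: bij_betw_def)
  from homogeneous[OF _ _ _ this] assms show ?thesis
    by auto
qed

lemma automorphism_moving_pair:
  assumes "u \<in> A" "w \<in> A" "u' \<in> A" "w' \<in> A" "lt u w" "lt u' w'" "c u = c u'" "c w = c w'"
  shows "\<exists>g. clo_iso_on lt c A lt c A g \<and> g u = u' \<and> g w = w'"
proof -
  define p where "p x = (if x = u then u' else w')" for x
  have uw: "u \<noteq> w" "u' \<noteq> w'"
    using assms irrefl by auto
  have "\<not> lt w u" "\<not> lt w' u'"
    using asym assms by blast+
  then have "clo_iso_on lt c {u, w} lt c {u', w'} p"
    unfolding clo_iso_on_def using uw assms irrefl by (auto simp: bij_betw_def p_def inj_on_def)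
  from homogeneous[OF _ _ _ this] assms uw show ?thesis
    by (auto simp: p_def)
qed

definition below_rel :: "(nat \<times> nat) set" where
  "below_rel = {(c x, c y) | x y. x \<in> A \<and> y \<in> A \<and> lt x y}"

lemma clo_invariant_eq: "clo_invariant (A, lt, c) = (c ` A, below_rel)"
  by (simp add: clo_invariant_def below_rel_def)

lemma colour_above:
  assumes "(c x, j) \<in> below_rel" "x \<in> A"
  shows "\<exists>y\<in>A. lt x y \<and> c y = j"
proof -
  obtain x0 y0 where h: "x0 \<in> A" "y0 \<in> A" "lt x0 y0" "c x0 = c x" "c y0 = j"
    using assms(1) unfolding below_rel_def by auto
  obtain g where "clo_iso_on lt c A lt c A g" "g x0 = x"
    using automorphism_moving_point[OF h(1) assms(2) h(4)] by blast
  then show ?thesis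
    using automorphismD h by (intro bexI[of _ "g y0"]) auto
qed

lemma colour_below:
  assumes "(i, c y) \<in> below_rel" "y \<in> A"
  shows "\<exists>x\<in>A. lt x y \<and> c x = i"
proof -
  obtain x0 y0 where h: "x0 \<in> A" "y0 \<in> A" "lt x0 y0" "c x0 = i" "c y0 = c y"
    using assms(1) unfolding below_rel_def by auto
  obtain g where "clo_iso_on lt c A lt c A g" "g y0 = y"
    using automorphism_moving_point[OF h(2) assms(2) h(5)] by blast
  then show ?thesis
    using automorphismD h by (intro bexI[of _ "g x0"]) auto
qed

lemma colour_between:
  assumes "x \<in> A" "y \<in> A" "lt x y" "(c x, i) \<in> below_rel" "(i, c y) \<in> below_rel"
  shows "\<exists>v\<in>A. lt x v \<and> lt v y \<and> c v = i"
proof -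
  obtain u v where uv: "u \<in> A" "v \<in> A" "lt u v" "c u = c x" "c v = i"
    using assms(4) unfolding below_rel_def by auto
  obtain w where w: "w \<in> A" "lt v w" "c w = c y"
    using colour_above[of v "c y"] assms(5) uv by auto
  obtain g where g: "clo_iso_on lt c A lt c A g" "g u = x" "g w = y"
    using automorphism_moving_pair[OF uv(1) w(1) assms(1,2) _ assms(3)] uv w trans by metis
  then show ?thesis
    using automorphismD[OF g(1)] uv w by (intro bexI[of _ "g v"]) auto
qed

text \<open>It suffices to go above the largest point of \<open>Lo\<close> and below the least point of \<open>Hi\<close>.\<close>

lemma colour_between_sets:
  assumes fin: "finite Lo" "finite Hi" "Lo \<subseteq> A" "Hi \<subseteq> A" and i: "i \<in> c ` A"
    and Lo: "\<And>y. y \<in> Lo \<Longrightarrow> (c y, i) \<in> below_rel" and Hi: "\<And>y. y \<in> Hi \<Longrightarrow> (i, c y) \<in> below_rel"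
    and Lo_Hi: "\<And>y y'. y \<in> Lo \<Longrightarrow> y' \<in> Hi \<Longrightarrow> lt y y'"
  shows "\<exists>b\<in>A. c b = i \<and> (\<forall>y\<in>Lo. lt y b) \<and> (\<forall>y\<in>Hi. lt b y)"
proof -
  have above_Lo: "\<forall>y\<in>Lo. lt y b" if "b \<in> A" "m \<in> Lo" "\<forall>y\<in>Lo. y \<noteq> m \<longrightarrow> lt y m" "lt m b" for m b
    using that trans fin(3) by (metis subsetD)
  have below_Hi: "\<forall>y\<in>Hi. lt b y" if "b \<in> A" "h \<in> Hi" "\<forall>y\<in>Hi. y \<noteq> h \<longrightarrow> lt h y" "lt b h" for h b
    using that trans fin(4) by (metis subsetD)
  show ?thesis
  proof (cases "Lo = {}"; cases "Hi = {}")
    assume "Lo = {}" "Hi = {}"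
    then show ?thesis
      using i by blast
  next
    assume "Lo = {}" "Hi \<noteq> {}"
    then obtain h where h: "h \<in> Hi" "\<forall>y\<in>Hi. y \<noteq> h \<longrightarrow> lt h y"
      using strict_linear_has_least[OF linear fin(2) _ fin(4)] by blast
    then obtain b where "b \<in> A" "lt b h" "c b = i"
      using colour_below Hi fin by blast
    then show ?thesis
      using below_Hi[OF _ h] \<open>Lo = {}\<close> by blast
  next
    assume "Lo \<noteq> {}" "Hi = {}"
    then obtain m where m: "m \<in> Lo" "\<forall>y\<in>Lo. y \<noteq> m \<longrightarrow> lt y m"
      using strict_linear_has_greatest[OF linear fin(1) _ fin(3)] by blast
    then obtain b where "b \<in> A" "lt m b" "c b = i"
      using colour_above Lo fin by blast
    then show ?thesis
      using above_Lo[OF _ m] \<open>Hi = {}\<close> by blast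
  next
    assume "Lo \<noteq> {}" "Hi \<noteq> {}"
    then obtain m h where m: "m \<in> Lo" "\<forall>y\<in>Lo. y \<noteq> m \<longrightarrow> lt y m"
      and h: "h \<in> Hi" "\<forall>y\<in>Hi. y \<noteq> h \<longrightarrow> lt h y"
      using strict_linear_has_greatest[OF linear fin(1) _ fin(3)]
        strict_linear_has_least[OF linear fin(2) _ fin(4)] by blast
    then obtain b where "b \<in> A" "lt m b" "lt b h" "c b = i"
      using colour_between[of m h i] Lo Hi Lo_Hi fin by blast
    then show ?thesis
      using above_Lo[OF _ m] below_Hi[OF _ h] by blast
  qed
qed

lemma clo_invariant_mem: "clo_invariant (A, lt, c) \<in> invariants k"
proof -
  have "trans below_rel"
  proof (rule transI)
    fix i j l assume "(i, j) \<in> below_rel" "(j, l) \<in> below_rel"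
    then obtain x y z where "x \<in> A" "y \<in> A" "lt x y" "c x = i" "c y = j" "z \<in> A" "lt y z" "c z = l"
      using colour_above unfolding below_rel_def by fastforce
    then show "(i, l) \<in> below_rel"
      unfolding below_rel_def using trans by blast
  qed
  moreover have "(i, j) \<in> below_rel \<or> (j, i) \<in> below_rel" if "i \<in> c ` A" "j \<in> c ` A" "i \<noteq> j" for i j
    using that total unfolding below_rel_def by blast
  ultimately show ?thesis
    using colour_bound
    by (auto simp: clo_invariant_eq invariants_def trans_total_rels_def below_rel_def)
qed

end

lemma hclo_extension_property:
  assumes S: "hclo k A lt c" and T: "hclo k B lt' c'"
    and eq: "clo_invariant (A, lt, c) = clo_invariant (B, lt', c')"
  shows "extension_property A lt c B lt' c'"
proof -
  interpret s: hclo k A lt c by (rule S)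
  interpret t: hclo k B lt' c' by (rule T)
  have colours: "c ` A = c' ` B" and rel: "s.below_rel = t.below_rel"
    using eq by (simp_all add: s.clo_invariant_eq t.clo_invariant_eq)
  show ?thesis
  proof (rule extension_property_from_interpolation[OF s.total s.asym t.asym])
    fix G a assume G: "finite G" "G \<subseteq> A \<times> B" "partial_iso lt c lt' c' G" and a: "a \<in> A"
    define Lo where "Lo = {y. \<exists>x. (x, y) \<in> G \<and> lt x a}"
    define Hi where "Hi = {y. \<exists>x. (x, y) \<in> G \<and> lt a x}"
    have "Lo \<subseteq> snd ` G" "Hi \<subseteq> snd ` G"
      unfolding Lo_def Hi_def by force+
    moreover have "snd ` G \<subseteq> B"
      using G(2) by auto
    ultimately have fin: "finite Lo" "finite Hi" "Lo \<subseteq> B" "Hi \<subseteq> B"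
      using G(1) finite_subset by blast+
    have pre: "x \<in> A \<and> c x = c' y" if "(x, y) \<in> G" for x y
      using G(2) partial_isoD[OF G(3) that that] that by auto
    have "(c' y, c a) \<in> t.below_rel" if y: "y \<in> Lo" for y
    proof -
      obtain x where x: "(x, y) \<in> G" "lt x a"
        using y unfolding Lo_def by blast
      then have "(c x, c a) \<in> s.below_rel"
        using pre a unfolding s.below_rel_def by blast
      then show ?thesis
        using rel pre[OF x(1)] by simp
    qed
    moreover have "(c a, c' y) \<in> t.below_rel" if y: "y \<in> Hi" for y
    proof -
      obtain x where x: "(x, y) \<in> G" "lt a x"
        using y unfolding Hi_def by blast
      then have "(c a, c x) \<in> s.below_rel"
        using pre a unfolding s.below_rel_def by blast
      then show ?thesis
        using rel pre[OF x(1)] by simp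
    qed
    moreover have "lt' y y'" if y: "y \<in> Lo" "y' \<in> Hi" for y y'
    proof -
      obtain x x' where x: "(x, y) \<in> G" "lt x a" "(x', y') \<in> G" "lt a x'"
        using y unfolding Lo_def Hi_def by blast
      then have "lt x x'"
        using s.trans pre a by blast
      then show ?thesis
        using partial_isoD[OF G(3) x(1) x(3)] by blast
    qed
    moreover have "c a \<in> c' ` B"
      using colours a by blast
    ultimately have "\<exists>b\<in>B. c' b = c a \<and> (\<forall>y\<in>Lo. lt' y b) \<and> (\<forall>y\<in>Hi. lt' b y)"
      using t.colour_between_sets[OF fin] by blast
    then show "\<exists>b\<in>B. c' b = c a \<and> (\<forall>(x, y)\<in>G. (lt x a \<longrightarrow> lt' y b) \<and> (lt a x \<longrightarrow> lt' b y))"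
      unfolding Lo_def Hi_def by blast
  qed
qed

lemma hclo_eq_invariant_imp_iso:
  assumes "is_hclo k S" "is_hclo k T" "clo_invariant S = clo_invariant T"
  shows "clo_iso S T"
proof -
  obtain A lt c B lt' c' where S: "S = (A, lt, c)" and T: "T = (B, lt', c')"
    by (cases S, cases T) auto
  have "hclo k A lt c" "hclo k B lt' c'"
    using assms(1,2) S T by (simp_all add: hclo_def)
  then have "extension_property A lt c B lt' c'" "extension_property B lt' c' A lt c"
    using hclo_extension_property assms(3) S T by metis+
  moreover have "partial_iso lt c lt' c' {}"
    by (simp add: partial_iso_def)
  ultimately show ?thesis
    using back_and_forth[of A lt c B lt' c' "{}"] by (auto simp: S T clo_iso_def)
qed

section \<open>A homogeneous structure with a prescribed invariant\<close>

definition dyadic :: "real \<Rightarrow> bool" where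
  "dyadic x \<longleftrightarrow> (\<exists>n. \<exists>m::int. x * 2 ^ n = of_int m)"

definition dyadic_exp :: "real \<Rightarrow> nat" where
  "dyadic_exp x = (LEAST n. \<exists>m::int. x * 2 ^ n = of_int m)"

lemma dyadic_odd_div_power:
  fixes m :: int
  assumes "odd m"
  shows "dyadic (of_int m / 2 ^ n)" "dyadic_exp (of_int m / 2 ^ n) = n"
proof -
  have P: "(\<exists>z::int. of_int m / 2 ^ n * 2 ^ j = (of_int z :: real)) \<longleftrightarrow> n \<le> j" for j
  proof
    assume "\<exists>z::int. of_int m / 2 ^ n * 2 ^ j = (of_int z :: real)"
    then obtain z :: int where z: "of_int m / 2 ^ n * 2 ^ j = (of_int z :: real)"
      by blast
    show "n \<le> j"
    proof (rule ccontr)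
      assume "\<not> n \<le> j"
      then obtain d where d: "n = j + Suc d"
        by (metis add_Suc_right less_imp_Suc_add not_le)
      then have "(of_int m :: real) = of_int (z * (2 * 2 ^ d))"
        using z by (simp add: power_add field_simps)
      then have "m = z * (2 * 2 ^ d)"
        by (simp only: of_int_eq_iff)
      then show False
        using assms by simp
    qed
  next
    assume "n \<le> j"
    then obtain d where "j = n + d"
      by (metis le_add_diff_inverse)
    then have "of_int m / 2 ^ n * 2 ^ j = (of_int (m * 2 ^ d) :: real)"
      by (simp add: power_add)
    then show "\<exists>z::int. of_int m / 2 ^ n * 2 ^ j = (of_int z :: real)"
      by blast
  qed
  show "dyadic_exp (of_int m / 2 ^ n) = n"
    unfolding dyadic_exp_def by (rule Least_equality) (use P in auto)
  show "dyadic (of_int m / 2 ^ n)"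
    unfolding dyadic_def using P by blast
qed

lemma dyadic_nat_plus_inverse_power:
  assumes "e \<ge> 1"
  shows "dyadic (real a + 1 / 2 ^ e)" "dyadic_exp (real a + 1 / 2 ^ e) = e"
proof -
  have "real a + 1 / 2 ^ e = of_int (int a * 2 ^ e + 1) / 2 ^ e"
    by (simp add: field_simps)
  moreover have "odd (int a * 2 ^ e + 1)"
    using assms by simp
  ultimately show "dyadic (real a + 1 / 2 ^ e)" "dyadic_exp (real a + 1 / 2 ^ e) = e"
    using dyadic_odd_div_power by metis+
qed

lemma dyadic_dense_exp_mod:
  assumes "k > 0" "i < k" "u < v"
  shows "\<exists>x. u < x \<and> x < v \<and> dyadic x \<and> dyadic_exp x mod k = i"
proof -
  obtain t :: nat where t: "2 / (v - u) < 2 ^ t"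
    using real_arch_pow[of 2 "2 / (v - u)"] by auto
  define n where "n = i + Suc t * k"
  have "n mod k = i"
    using assms by (simp only: n_def mod_mult_self1) simp
  have "t \<le> n"
    using mult_le_mono2[of 1 k "Suc t"] assms(1) unfolding n_def by simp
  then have "(2::real) ^ t \<le> 2 ^ n"
    by (rule power_increasing) simp
  with t have "2 / (v - u) < 2 ^ n"
    by linarith
  then have "2 < 2 ^ n * (v - u)"
    using assms(3) by (simp add: field_simps)
  then have "u * 2 ^ n + 2 < v * 2 ^ n"
    by (simp add: algebra_simps)
  moreover obtain m :: int where "odd m" "m = \<lfloor>u * 2 ^ n\<rfloor> + 1 \<or> m = \<lfloor>u * 2 ^ n\<rfloor> + 2"
    by (metis add.commute add_2_eq_Suc' even_Suc odd_one add.assoc one_add_one even_add)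
  ultimately have m: "odd m" "u * 2 ^ n < of_int m" "of_int m < v * 2 ^ n"
    by linarith+
  then have "u < of_int m / 2 ^ n" "of_int m / 2 ^ n < v"
    by (simp_all add: field_simps)
  then show ?thesis
    using dyadic_odd_div_power[OF m(1), of n] \<open>n mod k = i\<close> by auto
qed

lemma countable_dyadic: "countable {x. dyadic x}"
proof (rule countable_subset)
  show "{x. dyadic x} \<subseteq> (\<lambda>(m::int, n::nat). of_int m / 2 ^ n) ` UNIV"
    by (auto simp: dyadic_def field_simps image_iff intro!: exI)
qed simp

context invariant_pair
begin

text \<open>The block of level \<open>l\<close> occupies the interval \<open>(l, l + 1)\<close>.  A reflexive colour \<open>i\<close>
  is spread densely over it as the dyadic rationals whose denominator exponent is \<open>i\<close> modulo
  \<open>k\<close>; an irreflexive colour \<open>i\<close> is the single point \<open>l + 2\<^sup>-\<^sup>(\<^sup>k\<^sup>+\<^sup>i\<^sup>)\<close>, whose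
  exponent \<open>k + i\<close> is again \<open>i\<close> modulo \<open>k\<close>.\<close>

definition block :: "nat \<Rightarrow> real set" where
  "block i = (if (i, i) \<in> Q
     then {x. real (level i) < x \<and> x < real (level i) + 1 \<and> dyadic x \<and> dyadic_exp x mod k = i}
     else {real (level i) + 1 / 2 ^ (k + i)})"

definition points :: "real set" where
  "points = (\<Union>i\<in>U. block i)"

definition colour :: "real \<Rightarrow> nat" where
  "colour x = dyadic_exp x mod k"

lemma block_props:
  assumes "i \<in> U" "x \<in> block i"
  shows "colour x = i" "real (level i) < x" "x < real (level i) + 1" "dyadic x"
proof -
  have "i < k"
    using assms U_bound by auto
  have "colour x = i \<and> real (level i) < x \<and> x < real (level i) + 1 \<and> dyadic x"
  proof (cases "(i, i) \<in> Q")
    case True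
    then show ?thesis
      using assms(2) unfolding block_def colour_def by simp
  next
    case False
    then have x: "x = real (level i) + 1 / 2 ^ (k + i)"
      using assms(2) unfolding block_def by simp
    have "k + i \<ge> 1"
      using \<open>i < k\<close> by simp
    moreover have "(1::real) < 2 ^ (k + i)"
      using \<open>k + i \<ge> 1\<close> by (intro one_less_power) auto
    then have "(1::real) / 2 ^ (k + i) < 1"
      by simp
    ultimately show ?thesis
      unfolding x colour_def using dyadic_nat_plus_inverse_power \<open>i < k\<close> by simp
  qed
  then show "colour x = i" "real (level i) < x" "x < real (level i) + 1" "dyadic x"
    by blast+
qed

lemma block_nonempty: "i \<in> U \<Longrightarrow> \<exists>x. x \<in> block i"
  using dyadic_dense_exp_mod[of k i "real (level i)" "real (level i) + 1"] U_bound
  unfolding block_def by auto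

lemma points_block_colour: "x \<in> points \<Longrightarrow> colour x \<in> U \<and> x \<in> block (colour x)"
  unfolding points_def using block_props by auto

lemma countable_points: "countable points"
  using points_block_colour block_props by (intro countable_subset[OF _ countable_dyadic]) blast

lemma colour_points: "colour ` points = U"
  using points_block_colour block_nonempty block_props unfolding points_def by fastforce

lemma level_mono:
  assumes "i \<in> U" "j \<in> U" "x \<in> block i" "y \<in> block j" "x < y"
  shows "level i \<le> level j"
  using block_props[OF assms(1,3)] block_props[OF assms(2,4)] assms(5) by linarith

lemma level_less_imp_less:
  assumes "i \<in> U" "j \<in> U" "x \<in> block i" "y \<in> block j" "level i < level j"
  shows "x < y"
  using block_props[OF assms(1,3)] block_props[OF assms(2,4)] assms(5) by linarith

lemma points_below_rel: "{(colour x, colour y) | x y. x \<in> points \<and> y \<in> points \<and> x < y} = Q"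
proof (intro equalityI subsetI)
  fix p assume "p \<in> {(colour x, colour y) | x y. x \<in> points \<and> y \<in> points \<and> x < y}"
  then obtain x y where p: "p = (colour x, colour y)" "x \<in> points" "y \<in> points" "x < y"
    by blast
  define i j where "i = colour x" and "j = colour y"
  have ij: "i \<in> U" "j \<in> U" "x \<in> block i" "y \<in> block j"
    using points_block_colour p unfolding i_def j_def by auto
  have "level i \<le> level j"
    using level_mono[OF ij p(4)] .
  moreover have "(i, i) \<in> Q" if "level i = level j"
  proof (rule ccontr)
    assume "(i, i) \<notin> Q"
    then have "j = i" "block i = {real (level i) + 1 / 2 ^ (k + i)}"
      using level_eq_irrefl[OF ij(1,2)] that unfolding block_def by auto
    then show False
      using ij p(4) by simp
  qed
  ultimately show "p \<in> Q"
    using Q_iff_level[OF ij(1,2)] p(1) unfolding i_def j_def by force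
next
  fix p assume "p \<in> Q"
  then obtain i j where p: "p = (i, j)" "(i, j) \<in> Q" "i \<in> U" "j \<in> U"
    using Q_sub by (cases p) auto
  obtain x where x: "x \<in> block i"
    using block_nonempty[OF p(3)] by blast
  have "\<exists>y\<in>block j. x < y"
  proof (cases "level i < level j")
    case True
    then show ?thesis
      using level_less_imp_less[OF p(3,4) x] block_nonempty[OF p(4)] by blast
  next
    case False
    then have "level i = level j" "(j, j) \<in> Q"
      using Q_iff_level[OF p(3,4)] p(2) level_eq_iff[OF p(3,4)] block_refl by auto
    moreover obtain y where y: "x < y" "y < real (level j) + 1" "dyadic y" "dyadic_exp y mod k = j"
      using dyadic_dense_exp_mod[of k j x "real (level j) + 1"] block_props[OF p(3) x] U_bound p(4)
        calculation(1) by auto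
    ultimately have "y \<in> block j"
      using block_props[OF p(3) x] unfolding block_def by auto
    then show ?thesis
      using y(1) by blast
  qed
  then show "p \<in> {(colour x, colour y) | x y. x \<in> points \<and> y \<in> points \<and> x < y}"
    using x p block_props points_def by blast
qed

lemma same_block_below:
  assumes "i \<in> U" "j \<in> U" "x \<in> block j" "y \<in> block j" "a \<in> block i" "x < a"
  shows "y < real (level i) + 1"
  using level_mono[OF assms(2,1,3,5,6)] block_props[OF assms(2,4)] by linarith

lemma same_block_above:
  assumes "i \<in> U" "j \<in> U" "x \<in> block j" "y \<in> block j" "a \<in> block i" "a < x"
  shows "real (level i) < y"
  using level_mono[OF assms(1,2,5,3,6)] block_props[OF assms(2,4)] by linarith

lemma irrefl_block_separates:
  assumes "i \<in> U" "(i, i) \<notin> Q" "j \<in> U" "x \<in> block j" "y \<in> block j" "a \<in> block i" "x \<noteq> a"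
  shows "(x < a \<longleftrightarrow> y < a) \<and> (a < x \<longleftrightarrow> a < y)"
proof -
  have "level j \<noteq> level i"
  proof
    assume "level j = level i"
    then have "j = i"
      using level_eq_irrefl[OF assms(1,3,2)] by simp
    then show False
      using assms(2,4,6,7) unfolding block_def by simp
  qed
  then consider "level j < level i" | "level i < level j"
    by linarith
  then show ?thesis
    using level_less_imp_less assms by cases (metis not_less_iff_gr_or_eq)+
qed

lemma points_interpolation:
  assumes a: "a \<in> points" and P: "finite P" "P \<subseteq> points \<times> points" "partial_iso (<) colour (<) colour P"
    and new: "a \<notin> fst ` P"
  shows "\<exists>b\<in>points. colour b = colour a \<and> (\<forall>(x, y)\<in>P. (x < a \<longrightarrow> y < b) \<and> (a < x \<longrightarrow> b < y))"
proof -
  define i where "i = colour a"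
  have ai: "i \<in> U" "a \<in> block i"
    using points_block_colour[OF a] unfolding i_def by auto
  have pair: "colour x \<in> U \<and> x \<in> block (colour x) \<and> y \<in> block (colour x)" if "(x, y) \<in> P" for x y
  proof -
    have "x \<in> points" "y \<in> points" "colour x = colour y"
      using partial_isoD[OF P(3) that that] that P(2) by auto
    then show ?thesis
      using points_block_colour by metis
  qed
  show ?thesis
  proof (cases "(i, i) \<in> Q")
    case False
    have "(x < a \<longleftrightarrow> y < a) \<and> (a < x \<longleftrightarrow> a < y)" if "(x, y) \<in> P" for x y
      using irrefl_block_separates[OF ai(1) False _ _ _ ai(2)] pair[OF that] new that by force
    then show ?thesis
      using a unfolding i_def by blast
  next
    case True
    define Lw where "Lw = insert (real (level i)) {y. \<exists>x. (x, y) \<in> P \<and> x < a}"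
    define Hg where "Hg = insert (real (level i) + 1) {y. \<exists>x. (x, y) \<in> P \<and> a < x}"
    have "{y. \<exists>x. (x, y) \<in> P \<and> x < a} \<subseteq> snd ` P" "{y. \<exists>x. (x, y) \<in> P \<and> a < x} \<subseteq> snd ` P"
      by force+
    then have fin: "finite Lw" "finite Hg"
      using P(1) finite_subset unfolding Lw_def Hg_def by blast+
    have "y < y'" if "(x, y) \<in> P" "x < a" "(x', y') \<in> P" "a < x'" for x y x' y'
      using partial_isoD[OF P(3) that(1,3)] that(2,4) by simp
    then have "s < t" if "s \<in> Lw" "t \<in> Hg" for s t
      using that same_block_below[OF ai(1)] same_block_above[OF ai(1)] pair ai(2)
      unfolding Lw_def Hg_def by fastforce
    moreover have "Lw \<noteq> {}" "Hg \<noteq> {}"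
      unfolding Lw_def Hg_def by auto
    ultimately have "Max Lw < Min Hg"
      using fin Max_in Min_in by blast
    moreover have "0 < k" "i < k"
      using ai(1) U_bound by auto
    ultimately obtain b where b: "Max Lw < b" "b < Min Hg" "dyadic b" "dyadic_exp b mod k = i"
      using dyadic_dense_exp_mod by blast
    have "real (level i) \<le> Max Lw" "Min Hg \<le> real (level i) + 1"
      using fin by (simp_all add: Lw_def Hg_def)
    then have "b \<in> block i"
      using b True unfolding block_def by auto
    moreover have "y < b" if "(x, y) \<in> P" "x < a" for x y
      using that b(1) fin Max_ge[of Lw y] unfolding Lw_def by fastforce
    moreover have "b < y" if "(x, y) \<in> P" "a < x" for x y
      using that b(2) fin Min_le[of Hg y] unfolding Hg_def by fastforce
    ultimately show ?thesis
      using ai block_props unfolding points_def i_def by blast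
  qed
qed

lemma points_extension_property: "extension_property points (<) colour points (<) colour"
  by (rule extension_property_from_interpolation) (auto intro: points_interpolation)

text \<open>Coloured orderings live on sets of naturals, so \<open>points\<close> is transported along an
  enumeration.\<close>

definition nat_points :: "nat set" where
  "nat_points = to_nat_on points ` points"

abbreviation point_of :: "nat \<Rightarrow> real" where
  "point_of \<equiv> from_nat_into points"

definition canonical_clo :: clo where
  "canonical_clo = (nat_points, \<lambda>u v. point_of u < point_of v, \<lambda>u. colour (point_of u))"

lemma bij_point_of: "bij_betw point_of nat_points points"
proof -
  have "point_of (to_nat_on points x) = x" if "x \<in> points" for x
    using from_nat_into_to_nat_on[OF countable_points that] .
  then show ?thesis
    unfolding nat_points_def by (intro bij_betw_imageI) (auto simp: inj_on_def image_image)
qed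

lemma canonical_clo_hclo: "is_hclo k canonical_clo"
proof -
  have inj: "inj_on point_of nat_points" and image: "point_of ` nat_points = points"
    using bij_point_of by (auto simp: bij_betw_def)
  have "strict_linear_on nat_points (\<lambda>u v. point_of u < point_of v)"
    unfolding strict_linear_on_def
  proof (intro conjI ballI impI)
    fix u v assume "u \<in> nat_points" "v \<in> nat_points" "u \<noteq> v"
    then have "point_of u \<noteq> point_of v"
      using inj by (auto dest: inj_onD)
    then show "point_of u < point_of v \<or> point_of v < point_of u"
      by linarith
  qed auto
  moreover have "colour (point_of u) < k" if "u \<in> nat_points" for u
    using points_block_colour U_bound image that by auto
  moreover have "clo_homogeneous canonical_clo"
    unfolding canonical_clo_def
    by (rule extension_property_imp_homogeneous
        [OF extension_property_pullback[OF points_extension_property bij_point_of]])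
  ultimately show ?thesis
    by (simp add: is_hclo_def is_clo_def canonical_clo_def)
qed

lemma clo_invariant_canonical_clo: "clo_invariant canonical_clo = (U, Q)"
proof -
  have image: "point_of ` nat_points = points"
    using bij_point_of by (auto simp: bij_betw_def)
  have "(\<lambda>u. colour (point_of u)) ` nat_points = U"
    using colour_points image by (simp add: image_image[symmetric])
  moreover have "{(colour (point_of u), colour (point_of v)) | u v. u \<in> nat_points \<and> v \<in> nat_points \<and> point_of u < point_of v}
      = {(colour x, colour y) | x y. x \<in> points \<and> y \<in> points \<and> x < y}"
  proof (intro equalityI subsetI)
    fix p assume "p \<in> {(colour x, colour y) | x y. x \<in> points \<and> y \<in> points \<and> x < y}"
    then obtain x y where "p = (colour x, colour y)" "x \<in> point_of ` nat_points" "y \<in> point_of ` nat_points" "x < y"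
      unfolding image by blast
    then show "p \<in> {(colour (point_of u), colour (point_of v)) | u v.
        u \<in> nat_points \<and> v \<in> nat_points \<and> point_of u < point_of v}"
      by blast
  qed (use image in blast)
  ultimately show ?thesis
    using points_below_rel by (simp add: clo_invariant_def canonical_clo_def)
qed

end

lemma hclo_iso_iff_eq_invariant:
  "is_hclo k S \<Longrightarrow> is_hclo k T \<Longrightarrow> clo_iso S T \<longleftrightarrow> clo_invariant S = clo_invariant T"
  using clo_iso_imp_eq_invariant hclo_eq_invariant_imp_iso by blast

lemma hclo_invariant_mem: "is_hclo k S \<Longrightarrow> clo_invariant S \<in> invariants k"
  using hclo.clo_invariant_mem by (cases S) (simp add: hclo_def)

lemma invariant_realised: "v \<in> invariants k \<Longrightarrow> \<exists>S. is_hclo k S \<and> clo_invariant S = v"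
  using invariant_pair.canonical_clo_hclo invariant_pair.clo_invariant_canonical_clo invariant_pair.intro
  by (cases v) metis

lemma L_eq_card_invariants: "L k = card (invariants k)"
proof -
  have "L k = card (clo_invariant ` {S. is_hclo k S})"
    unfolding L_def by (rule card_iso_types_complete_invariant) (rule hclo_iso_iff_eq_invariant)
  also have "clo_invariant ` {S. is_hclo k S} = invariants k"
  proof (intro equalityI subsetI)
    fix v assume "v \<in> invariants k"
    then obtain S where "is_hclo k S" "clo_invariant S = v"
      using invariant_realised by blast
    then show "v \<in> clo_invariant ` {S. is_hclo k S}"
      by blast
  qed (use hclo_invariant_mem in auto)
  finally show ?thesis .
qed

lemma L_all_eq_J: "L_all k = J k"
proof -
  have colours: "fst (clo_invariant S) = snd (snd S) ` fst S" for S
    by (cases S) (simp add: clo_invariant_def)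
  define P where "P S \<longleftrightarrow> is_hclo k S \<and> snd (snd S) ` fst S = {0..<k}" for S
  have "L_all k = card (clo_invariant ` {S. P S})"
    unfolding L_all_def P_def[symmetric]
    by (rule card_iso_types_complete_invariant) (use hclo_iso_iff_eq_invariant in \<open>auto simp: P_def\<close>)
  also have "clo_invariant ` {S. P S} = {v \<in> invariants k. fst v = {..<k}}"
  proof (intro equalityI subsetI)
    fix v assume "v \<in> clo_invariant ` {S. P S}"
    then obtain S where "P S" "v = clo_invariant S"
      by blast
    then show "v \<in> {v \<in> invariants k. fst v = {..<k}}"
      using hclo_invariant_mem colours[of S] unfolding P_def atLeast0LessThan by simp
  next
    fix v assume v: "v \<in> {v \<in> invariants k. fst v = {..<k}}"
    then obtain S where S: "is_hclo k S" "clo_invariant S = v"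
      using invariant_realised by blast
    then have "P S"
      using v colours[of S] unfolding P_def atLeast0LessThan by simp
    then show "v \<in> clo_invariant ` {S. P S}"
      using S(2) by blast
  qed
  finally show ?thesis
    by (simp add: card_invariants_all_colours)
qed

section \<open>Exponential generating functions\<close>

lemma fps_nth_2_minus_X_minus_exp:
  "fps_nth (2 - fps_X - fps_exp 1 :: 'a::field_char_0 fps) n =
     (if n = 0 then 2 else 0) - (if n = 1 then 1 else 0) - 1 / fact n"
  by (simp add: fps_numeral_nth fps_exp_def fps_X_nth)

lemma fps_nth_0_2_minus_X_minus_exp: "fps_nth (2 - fps_X - fps_exp 1 :: 'a::field_char_0 fps) 0 \<noteq> 0"
  by (simp add: fps_nth_2_minus_X_minus_exp)

lemma binomial_transform_egf:
  "Abs_fps (\<lambda>n. (\<Sum>i=0..n. of_nat (n choose i) * a i) / fact n :: 'a::field_char_0)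
     = fps_exp 1 * Abs_fps (\<lambda>n. a n / fact n)"
proof (rule fps_ext)
  fix n
  have "fps_nth (Abs_fps (\<lambda>n. a n / fact n) * fps_exp 1) n = (\<Sum>i=0..n. a i / fact i * (1 / fact (n - i)))"
    by (simp add: fps_mult_nth fps_exp_def)
  also have "\<dots> = (\<Sum>i=0..n. of_nat (n choose i) * a i / fact n)"
    by (rule sum.cong[OF refl]) (simp add: binomial_fact del: fact_Suc of_nat_Suc)
  finally show "fps_nth (Abs_fps (\<lambda>n. (\<Sum>i=0..n. of_nat (n choose i) * a i) / fact n)) n
      = fps_nth (fps_exp 1 * Abs_fps (\<lambda>n. a n / fact n)) n"
    by (simp add: mult.commute sum_divide_distrib)
qed

lemma J_egf_mult:
  "(2 - fps_X - fps_exp 1) * Abs_fps (\<lambda>n. of_nat (J n) / fact n :: 'a::field_char_0) = 1"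
proof (rule fps_ext)
  fix n
  define G where "G k = (of_nat (J k) / fact k :: 'a)" for k
  show "fps_nth ((2 - fps_X - fps_exp 1) * Abs_fps G) n = fps_nth 1 n"
  proof (cases n)
    case 0
    then show ?thesis
      by (simp add: fps_mult_nth fps_nth_2_minus_X_minus_exp G_def)
  next
    case (Suc m)
    have split: "{0..Suc m} = insert 0 (insert 1 {2..Suc m})"
      by auto
    have binom: "G (Suc m - i) / fact i = of_nat (Suc m choose i) * of_nat (J (Suc m - i)) / fact (Suc m)"
      if "i \<in> {2..Suc m}" for i
      using that by (simp add: G_def binomial_fact del: fact_Suc of_nat_Suc)
    have "fps_nth ((2 - fps_X - fps_exp 1) * Abs_fps G) (Suc m)
        = G (Suc m) - 2 * G m - (\<Sum>i\<in>{2..Suc m}. G (Suc m - i) / fact i)"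
      unfolding fps_mult_nth fps_nth_Abs_fps fps_nth_2_minus_X_minus_exp split
      by (simp add: sum_negf[symmetric] diff_divide_distrib sum_subtractf algebra_simps)
    also have "\<dots> = G (Suc m) - 2 * G m
        - (\<Sum>i\<in>{2..Suc m}. of_nat (Suc m choose i) * of_nat (J (Suc m - i))) / fact (Suc m)"
      by (simp only: sum.cong[OF refl binom] sum_divide_distrib)
    also have "\<dots> = 0"
    proof -
      have "fact (Suc m) = (of_nat (Suc m) * fact m :: 'a)"
        by simp
      then show ?thesis
        unfolding G_def J.simps(2) of_nat_add of_nat_mult of_nat_sum
        by (simp add: field_simps del: of_nat_Suc fact_Suc)
    qed
    finally show ?thesis
      using Suc by simp
  qed
qed

lemma J_egf: "Abs_fps (\<lambda>n. of_nat (J n) / fact n :: 'a::field_char_0) = 1 / (2 - fps_X - fps_exp 1)"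
proof -
  let ?D = "2 - fps_X - fps_exp 1 :: 'a fps"
  have "inverse ?D = inverse ?D * (?D * Abs_fps (\<lambda>n. of_nat (J n) / fact n))"
    by (simp add: J_egf_mult)
  also have "\<dots> = (inverse ?D * ?D) * Abs_fps (\<lambda>n. of_nat (J n) / fact n)"
    by (simp only: mult.assoc)
  also have "\<dots> = Abs_fps (\<lambda>n. of_nat (J n) / fact n)"
    unfolding inverse_mult_eq_1[OF fps_nth_0_2_minus_X_minus_exp] by simp
  finally show ?thesis
    by (simp add: fps_divide_unit[OF fps_nth_0_2_minus_X_minus_exp])
qed

lemma binomial_J_egf:
  "Abs_fps (\<lambda>n. of_nat (\<Sum>i=0..n. J i * (n choose i)) / fact n :: 'a::field_char_0)
     = fps_exp 1 / (2 - fps_X - fps_exp 1)"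
proof -
  have "Abs_fps (\<lambda>n. of_nat (\<Sum>i=0..n. J i * (n choose i)) / fact n :: 'a)
      = Abs_fps (\<lambda>n. (\<Sum>i=0..n. of_nat (n choose i) * of_nat (J i)) / fact n)"
    by (simp add: mult.commute)
  also have "\<dots> = fps_exp 1 * Abs_fps (\<lambda>n. of_nat (J n) / fact n)"
    by (rule binomial_transform_egf)
  finally show ?thesis
    unfolding J_egf by simp
qed

section \<open>Singularity analysis\<close>

lemma has_fps_expansion_simple_pole:
  fixes z0 A :: complex
  assumes "z0 \<noteq> 0"
  shows "(\<lambda>z. A / (z - z0)) has_fps_expansion Abs_fps (\<lambda>n. - A / z0 ^ (n + 1))"
proof (rule has_fps_expansionI)
  have "eventually (\<lambda>u. u \<in> ball 0 (norm z0)) (nhds (0::complex))"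
    using assms by (intro eventually_nhds_in_open) auto
  then show "eventually (\<lambda>u. (\<lambda>n. fps_nth (Abs_fps (\<lambda>n. - A / z0 ^ (n + 1))) n * u ^ n) sums (A / (u - z0))) (nhds 0)"
  proof eventually_elim
    case (elim u)
    then have "norm (u / z0) < 1"
      using assms by (simp add: norm_divide divide_less_eq)
    then have "(\<lambda>n. (- A / z0) * (u / z0) ^ n) sums ((- A / z0) * (1 / (1 - u / z0)))"
      by (intro sums_mult geometric_sums)
    moreover have "u \<noteq> z0"
      using elim by auto
    moreover have "- (A / (z0 - u)) = A / (u - z0)"
      by (metis minus_diff_eq minus_divide_right)
    ultimately show ?case
      using assms by (simp add: field_simps power_divide)
  qed
qed

text \<open>The polar part contributes \<open>-A / z\<^sub>0\<^sup>n\<^sup>+\<^sup>1\<close> to the \<open>n\<close>-th coefficient; the remainder \<open>h\<close>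
  has a power series converging beyond \<open>|z\<^sub>0|\<close>, so its coefficients are \<open>o(|z\<^sub>0|\<^sup>-\<^sup>n)\<close>.\<close>

lemma fps_coeff_asymp_simple_pole:
  fixes z0 A :: complex and F :: "complex fps"
  assumes hol: "h holomorphic_on ball 0 r" and z0: "z0 \<noteq> 0" "norm z0 < r"
    and F: "f has_fps_expansion F" and f: "\<And>z. z \<in> ball 0 (norm z0) \<Longrightarrow> f z = A / (z - z0) + h z"
  shows "(\<lambda>n. fps_nth F n * z0 ^ (n + 1)) \<longlonglongrightarrow> - A"
proof -
  define E where "E = Abs_fps (\<lambda>n. - A / z0 ^ (n + 1))"
  have "eventually (\<lambda>u. u \<in> ball 0 (norm z0)) (nhds (0::complex))"
    using z0(1) by (intro eventually_nhds_in_open) auto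
  then have "eventually (\<lambda>z. f z - A / (z - z0) = h z) (nhds 0)"
    by eventually_elim (simp add: f)
  from has_fps_expansion_cong[OF this refl, THEN iffD1,
      OF has_fps_expansion_diff[OF F has_fps_expansion_simple_pole[OF z0(1)]]]
  have hE: "h has_fps_expansion F - E"
    unfolding E_def .
  define R where "R = (norm z0 + r) / 2"
  have "0 < norm z0"
    using z0(1) by simp
  have R: "norm z0 < R" "R < r" "0 < R"
    using z0(2) \<open>0 < norm z0\<close> unfolding R_def by (simp_all add: field_simps, linarith+)
  have "h holomorphic_on eball 0 (ereal r)" "ereal (norm (complex_of_real R)) < ereal r"
    using hol R by simp_all
  from has_fps_expansion_imp_sums_complex[OF hE this]
  have "(\<lambda>n. fps_nth (F - E) n * of_real R ^ n) \<longlonglongrightarrow> 0"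
    using summable_LIMSEQ_zero sums_summable by blast
  moreover have "(\<lambda>n. (z0 / of_real R) ^ n) \<longlonglongrightarrow> 0"
    using R by (intro LIMSEQ_power_zero) (simp add: norm_divide divide_less_eq)
  ultimately have "(\<lambda>n. fps_nth (F - E) n * of_real R ^ n * (z0 / of_real R) ^ n * z0) \<longlonglongrightarrow> 0 * 0 * z0"
    by (intro tendsto_mult tendsto_const)
  moreover have "fps_nth (F - E) n * of_real R ^ n * (z0 / of_real R) ^ n * z0 = fps_nth F n * z0 ^ (n + 1) + A" for n
    using z0 R by (simp add: E_def field_simps power_divide)
  ultimately have "(\<lambda>n. fps_nth F n * z0 ^ (n + 1) + A) \<longlonglongrightarrow> 0"
    by simp
  from tendsto_add[OF this tendsto_const[of "- A"]] show ?thesis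
    by simp
qed

text \<open>The dominant singularity \<open>\<rho> = 2 - W(e\<^sup>2)\<close> of \<open>1 / (2 - x - e\<^sup>x)\<close>.\<close>

definition rho :: real where
  "rho = (SOME x. 0 < x \<and> x < 1 \<and> exp x = 2 - x)"

lemma rho: "0 < rho" "rho \<le> 1 / 2" "exp rho = 2 - rho"
proof -
  have "\<exists>x\<ge>0. x \<le> 1 \<and> exp x + x = (2::real)"
  proof (rule IVT[where f = "\<lambda>x. exp x + x"])
    show "(2::real) \<le> exp 1 + 1"
      using exp_ge_add_one_self[of "1::real"] by simp
  qed (auto intro!: continuous_intros)
  then obtain x :: real where x: "0 \<le> x" "x \<le> 1" "exp x + x = 2"
    by blast
  then have "x \<noteq> 0" "x \<noteq> 1"
    using exp_ge_add_one_self[of "1::real"] by auto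
  with x have "\<exists>x::real. 0 < x \<and> x < 1 \<and> exp x = 2 - x"
    by (intro exI[of _ x]) auto
  then have "0 < rho \<and> rho < 1 \<and> exp rho = 2 - rho"
    unfolding rho_def by (rule someI_ex)
  then show "0 < rho" "rho \<le> 1 / 2" "exp rho = 2 - rho"
    using exp_ge_add_one_self[of rho] by auto
qed

lemma lambertW_exp_2: "lambertW (exp 2) = 2 - rho"
  unfolding lambertW_def
proof (rule the_equality)
  have "(2 - rho) * exp (2 - rho) = exp 2"
    using rho(3) by (simp add: exp_diff)
  then show "-1 \<le> 2 - rho \<and> (2 - rho) * exp (2 - rho) = exp 2"
    using rho(2) by simp
next
  fix w :: real assume w: "-1 \<le> w \<and> w * exp w = exp 2"
  have pos: "0 < v" if "v * exp v = exp 2" for v :: real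
    using that by (metis exp_gt_zero less_le mult_nonpos_nonneg not_less)
  have mono: "v1 * exp v1 < v2 * exp v2" if "0 < v1" "v1 < v2" for v1 v2 :: real
    using that by (intro mult_strict_mono) auto
  have "(2 - rho) * exp (2 - rho) = exp 2"
    using rho(3) by (simp add: exp_diff)
  then show "w = 2 - rho"
    using w pos mono by (metis linorder_neq_iff)
qed

lemma exp_complex_rho: "exp (complex_of_real rho) = 2 - complex_of_real rho"
  by (metis rho(3) exp_of_real of_real_diff of_real_numeral)

lemma Ln_lipschitz_near_2:
  assumes "a \<in> ball 2 (3/4)" "b \<in> ball 2 (3/4)"
  shows "norm (Ln a - Ln b) \<le> 4/5 * norm (a - b)"
proof (rule field_differentiable_bound[where f' = inverse and S = "ball 2 (3/4)"])
  fix w :: complex assume "w \<in> ball 2 (3/4)"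
  then have w: "norm (2 - w) < 3/4"
    by (simp add: dist_norm)
  then have "Re w > 0"
    using complex_Re_le_cmod[of "2 - w"] by simp
  then have "w \<notin> \<real>\<^sub>\<le>\<^sub>0"
    by (simp add: complex_nonpos_Reals_iff)
  then show "(Ln has_field_derivative inverse w) (at w within ball 2 (3/4))"
    by (rule has_field_derivative_at_within[OF has_field_derivative_Ln])
  have "5/4 \<le> norm w"
    using norm_triangle_ineq[of w "2 - w"] w by simp
  then have "inverse (norm w) \<le> inverse (5/4)"
    by (rule le_imp_inverse_le) simp
  then show "norm (inverse w) \<le> 4/5"
    by (simp add: norm_inverse)
qed (use assms in auto)

text \<open>By the Lipschitz bound, \<open>z \<mapsto> Ln (2 - z)\<close> is a contraction on the disc of radius \<open>3/4\<close>, and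
  its fixed points there are the zeros of \<open>2 - z - e\<^sup>z\<close>.\<close>

lemma denominator_zero_unique:
  fixes z :: complex
  assumes "z \<in> ball 0 (3/4)" "2 - z - exp z = 0"
  shows "z = of_real rho"
proof -
  have fixed_point: "Ln (2 - u) = u" if "u \<in> ball 0 (3/4)" "exp u = 2 - u" for u :: complex
  proof -
    have "\<bar>Im u\<bar> < 3/4"
      using abs_Im_le_cmod[of u] that(1) by simp
    then have "Ln (exp u) = u"
      using pi_gt3 by (intro Ln_exp) auto
    with that(2) show ?thesis
      by simp
  qed
  have rho_ball: "complex_of_real rho \<in> ball 0 (3/4)"
    using rho(1,2) by simp
  have "norm (z - of_real rho) = norm (Ln (2 - z) - Ln (2 - of_real rho))"
    using fixed_point[OF assms(1)] fixed_point[OF rho_ball exp_complex_rho] assms(2)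
    by (simp add: algebra_simps)
  also have "\<dots> \<le> 4/5 * norm (z - of_real rho)"
    using Ln_lipschitz_near_2[of "2 - z" "2 - of_real rho"] assms(1) rho_ball
    by (simp add: dist_norm norm_minus_commute)
  finally show ?thesis
    by simp
qed

lemma exp_over_denominator_decomposition:
  fixes c :: complex
  obtains h where "h holomorphic_on ball 0 (3/4)"
    "\<And>z. z \<in> ball 0 (3/4) - {of_real rho} \<Longrightarrow> exp (c * z) / (2 - z - exp z)
       = - (exp (c * of_real rho) / (1 + exp (of_real rho))) / (z - of_real rho) + h z"
proof -
  define z0 where "z0 = complex_of_real rho"
  define D where "D z = 2 - z - exp z" for z :: complex
  define S where "S = ball (0::complex) (3/4)"
  have z0S: "z0 \<in> interior S"
    using rho(1,2) by (simp add: z0_def S_def)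
  have exp_z0: "exp z0 = 2 - z0"
    unfolding z0_def by (rule exp_complex_rho)
  have D_nonzero: "D z \<noteq> 0" if "z \<in> S" "z \<noteq> z0" for z
    using denominator_zero_unique[of z] that by (auto simp: D_def S_def z0_def)
  have "(D has_field_derivative (0 - 1 - exp z0)) (at z0)"
    unfolding D_def by (intro derivative_intros DERIV_exp)
  then have D': "deriv D z0 = - (1 + exp z0)"
    by (simp add: DERIV_imp_deriv)
  have "1 + exp z0 \<noteq> 0"
  proof
    assume "1 + exp z0 = 0"
    then have "complex_of_real rho = complex_of_real 3"
      unfolding exp_z0 by (simp add: z0_def algebra_simps)
    then have "rho = 3"
      by (simp only: of_real_eq_iff)
    then show False
      using rho(2) by simp
  qed
  define q where "q z = (if z = z0 then deriv D z0 else (D z - D z0) / (z - z0))" for z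
  have "q holomorphic_on S"
    unfolding q_def D_def by (rule pole_lemma[OF _ z0S]) (intro holomorphic_intros)
  moreover have "q z \<noteq> 0" if "z \<in> S" for z
    using D' \<open>1 + exp z0 \<noteq> 0\<close> D_nonzero[OF that] exp_z0 by (auto simp: q_def D_def)
  ultimately have g: "(\<lambda>z. exp (c * z) / q z) holomorphic_on S"
    by (intro holomorphic_intros) auto
  have "exp (c * z) / q z = (z - z0) * (exp (c * z) / D z)" if "z \<in> S - {z0}" for z
    using that D_nonzero[of z] exp_z0 by (auto simp: q_def D_def field_simps)
  from pole_theorem[OF g z0S this]
  have "(\<lambda>z. if z = z0 then deriv (\<lambda>z. exp (c * z) / q z) z0
      else exp (c * z) / D z - exp (c * z0) / q z0 / (z - z0)) holomorphic_on S" .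
  moreover have "exp (c * z0) / q z0 = - (exp (c * z0) / (1 + exp z0))"
    unfolding q_def if_P[OF refl] D' by (simp only: divide_minus_right)
  ultimately show ?thesis
    using that[of "\<lambda>z. if z = z0 then deriv (\<lambda>z. exp (c * z) / q z) z0
      else exp (c * z) / D z - exp (c * z0) / q z0 / (z - z0)"]
    by (simp add: S_def D_def z0_def)
qed

lemma egf_coeff_asymp:
  fixes a :: "nat \<Rightarrow> nat" and c :: real
  assumes "Abs_fps (\<lambda>n. of_nat (a n) / fact n :: complex) = fps_exp (of_real c) / (2 - fps_X - fps_exp 1)"
  shows "(\<lambda>n. real (a n) / fact n * rho ^ (n + 1)) \<longlonglongrightarrow> exp (c * rho) / (1 + exp rho)"
proof -
  have "(\<lambda>z::complex. 2 - z - exp (1 * z)) has_fps_expansion (2 - fps_X - fps_exp 1)"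
    by (intro has_fps_expansion_diff has_fps_expansion_numeral has_fps_expansion_fps_X has_fps_expansion_exp)
  then have "(\<lambda>z::complex. 2 - z - exp z) has_fps_expansion (2 - fps_X - fps_exp 1)"
    by simp
  from has_fps_expansion_divide'[OF has_fps_expansion_exp this]
  have F: "(\<lambda>z::complex. exp (of_real c * z) / (2 - z - exp z)) has_fps_expansion
      Abs_fps (\<lambda>n. of_nat (a n) / fact n)"
    unfolding assms by (simp add: fps_nth_2_minus_X_minus_exp)
  obtain h where h: "h holomorphic_on ball 0 (3/4)"
    "\<And>z. z \<in> ball 0 (3/4) - {of_real rho} \<Longrightarrow> exp (of_real c * z) / (2 - z - exp z)
       = - (exp (of_real c * of_real rho) / (1 + exp (of_real rho))) / (z - of_real rho) + h z"
    using exp_over_denominator_decomposition[of "of_real c"] by blast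
  have "(\<lambda>n. fps_nth (Abs_fps (\<lambda>n. of_nat (a n) / fact n)) n * of_real rho ^ (n + 1))
      \<longlonglongrightarrow> - (- (exp (of_real c * of_real rho) / (1 + exp (of_real rho))) :: complex)"
  proof (rule fps_coeff_asymp_simple_pole[OF h(1) _ _ F])
    show "complex_of_real rho \<noteq> 0" "norm (complex_of_real rho) < 3/4"
      using rho(1,2) by auto
    fix z :: complex assume "z \<in> ball 0 (norm (complex_of_real rho))"
    then have "z \<in> ball 0 (3/4) - {of_real rho}"
      using rho(1,2) by auto
    then show "exp (of_real c * z) / (2 - z - exp z)
        = - (exp (of_real c * of_real rho) / (1 + exp (of_real rho))) / (z - of_real rho) + h z"
      by (rule h(2))
  qed
  then have "(\<lambda>n. complex_of_real (real (a n) / fact n * rho ^ (n + 1)))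
      \<longlonglongrightarrow> complex_of_real (exp (c * rho) / (1 + exp rho))"
    by (simp flip: exp_of_real)
  then show ?thesis
    by (simp only: tendsto_of_real_iff)
qed

lemma one_plus_exp_rho_pos: "0 < 1 + exp rho"
  using exp_gt_zero[of rho] by linarith

lemma L_egf: "Abs_fps (\<lambda>n. of_nat (L n) / fact n :: 'a::field_char_0) = fps_exp 1 / (2 - fps_X - fps_exp 1)"
  using binomial_J_egf by (simp add: L_eq_card_invariants card_invariants)

lemma L_all_egf: "Abs_fps (\<lambda>n. of_nat (L_all n) / fact n :: 'a::field_char_0) = 1 / (2 - fps_X - fps_exp 1)"
  using J_egf by (simp add: L_all_eq_J)

lemma L_scaled_limit: "(\<lambda>n. real (L n) / fact n * rho ^ (n + 1)) \<longlonglongrightarrow> exp rho / (1 + exp rho)"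
  using egf_coeff_asymp[of L 1] L_egf by simp

lemma L_all_scaled_limit: "(\<lambda>n. real (L_all n) / fact n * rho ^ (n + 1)) \<longlonglongrightarrow> 1 / (1 + exp rho)"
  using egf_coeff_asymp[of L_all 0] L_all_egf by simp

lemma L_asymp_equiv: "(\<lambda>n. real (L n)) \<sim>[at_top] (\<lambda>n. fact n * (exp rho / (1 + exp rho)) * (1 / rho) ^ (n + 1))"
proof (rule asymp_equivI')
  have "(\<lambda>n. real (L n) / fact n * rho ^ (n + 1) / (exp rho / (1 + exp rho))) \<longlonglongrightarrow> 1"
    using tendsto_divide[OF L_scaled_limit tendsto_const, of "exp rho / (1 + exp rho)"]
      one_plus_exp_rho_pos by simp
  then show "(\<lambda>n. real (L n) / (fact n * (exp rho / (1 + exp rho)) * (1 / rho) ^ (n + 1))) \<longlonglongrightarrow> 1"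
    using rho(1) by (simp add: field_simps power_one_over)
qed

lemma L_all_ratio_limit: "(\<lambda>n. real (L_all n) / real (L n)) \<longlonglongrightarrow> 1 / (2 - rho)"
proof -
  have "(\<lambda>n. (real (L_all n) / fact n * rho ^ (n + 1)) / (real (L n) / fact n * rho ^ (n + 1)))
      \<longlonglongrightarrow> (1 / (1 + exp rho)) / (exp rho / (1 + exp rho))"
    using one_plus_exp_rho_pos by (intro tendsto_divide L_all_scaled_limit L_scaled_limit) simp
  moreover have "(\<lambda>n. (real (L_all n) / fact n * rho ^ (n + 1)) / (real (L n) / fact n * rho ^ (n + 1)))
      = (\<lambda>n. real (L_all n) / real (L n))"
    using rho(1) by (simp add: fun_eq_iff)
  moreover have "(1 / (1 + exp rho)) / (exp rho / (1 + exp rho)) = 1 / (2 - rho)"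
    using rho(3) one_plus_exp_rho_pos by simp
  ultimately show ?thesis
    by simp
qed

theorem mainTheorem9:
  shows "(\<forall>k. L k = num_models_T k)
    \<and> (\<forall>k. L k = (\<Sum>i=0..k. J i * (k choose i)))
    \<and> Abs_fps (\<lambda>k. real (L k) / fact k) = fps_exp (1::real) / (2 - fps_X - fps_exp 1)
    \<and> (let Z = 2 - lambertW (exp 2); R = - exp 2 / (exp (lambertW (exp 2)) + exp 2) in
        (\<lambda>k. real (L k)) \<sim>[at_top] (\<lambda>k. - fact k * R * (1 / Z) ^ (k + 1)))
    \<and> (\<lambda>k. real (L_all k) / real (L k)) \<longlonglongrightarrow> 1 / lambertW (exp 2)"
proof (intro conjI allI)
  show "L k = num_models_T k" "L k = (\<Sum>i=0..k. J i * (k choose i))" for k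
    by (simp_all add: L_eq_card_invariants num_models_T_eq_card_invariants card_invariants)
  show "Abs_fps (\<lambda>k. real (L k) / fact k) = fps_exp 1 / (2 - fps_X - fps_exp 1)"
    by (rule L_egf)
  have "exp (lambertW (exp 2)) + exp 2 = exp 2 * (1 + exp rho) / exp rho"
    unfolding lambertW_exp_2 by (simp add: exp_diff field_simps)
  then have R: "- exp 2 / (exp (lambertW (exp 2)) + exp 2) = - (exp rho / (1 + exp rho))"
    using one_plus_exp_rho_pos by simp
  show "let Z = 2 - lambertW (exp 2); R = - exp 2 / (exp (lambertW (exp 2)) + exp 2) in
      (\<lambda>k. real (L k)) \<sim>[at_top] (\<lambda>k. - fact k * R * (1 / Z) ^ (k + 1))"
    unfolding Let_def R unfolding lambertW_exp_2 using L_asymp_equiv by simp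
  show "(\<lambda>k. real (L_all k) / real (L k)) \<longlonglongrightarrow> 1 / lambertW (exp 2)"
    unfolding lambertW_exp_2 by (rule L_all_ratio_limit)
qed

end
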